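(* Let $E_1$ and $E_2$ be reflexive para-Hilbert spaces and let $A=(A_X,A_H,A_Y)\in \operatorname{Mor}(E_1;E_2)$ be a surjective morphism. Define $E_0\coloneqq (\ker(A_X),\ker(A_H),\ker(A_Y))$, i.e. $X_{E_0}=\ker(A_X)\subset X_{E_1}$, $H_{E_0}=\ker(A_H)\subset H_{E_1}$, $Y_{E_0}=\ker(A_Y)\subset Y_{E_1}$, and denote the canonical injections by $i_{E_0}\colon X_{E_0}\hookrightarrow H_{E_0}$ and $j_{E_0}\colon H_{E_0}\hookrightarrow Y_{E_0}$. Moreover, define \begin{align*} I_{E_0}\colon H_{E_0}\to H_{E_0}', &\quad \langle I_{E_0}\, v_1, v_2\rangle \coloneqq \langle I_{E_1}\, v_1, v_2\rangle \quad \text{for } v_1, v_2 \in H_{E_0},\\ J_{E_0}\colon X_{E_0}\to Y_{E_0}', &\quad \langle J_{E_0}\, u, w\rangle \coloneqq \langle J_{E_1}\, u, w\rangle \quad \text{for } u \in X_{E_0},\ w \in Y_{E_0}. \end{align*} Then the following statements are equivalent: \begin{enumerate} \item $A$ admits a pseudoinverse. \item The mapping $\begin{pmatrix} J_{E_1} & A_Y' \\ A_X & 0 \end{pmatrix}\colon X_{E_1}\oplus Y_{E_2}' \to Y_{E_1}'\oplus X_{E_2}$ is continuously invertible. \item The mapping $\begin{pmatrix} K_{E_1} & A_X' \\ A_Y & 0 \end{pmatrix}\colon Y_{E_1}\oplus X_{E_2}' \to X_{E_1}'\oplus Y_{E_2}$ is continuously invertible. \end{enumerate} In any of these cases, $(E_0,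 I_{E_0}, J_{E_0})$ is a para-Hilbert space.
   Context: A para-Hilbert space $E$ consists of two Banach spaces $X_E$, $Y_E$ and a Hilbert space $H_E$; continuous, linear, dense injections $i_E\colon X_E\hookrightarrow H_E$ and $j_E\colon H_E\hookrightarrow Y_E$; an inner product on $H_E$ with Riesz isomorphism $I_E\colon H_E\to H_E'$; and a Banach space isomorphism $J_E\colon X_E\to Y_E'$ such that $I_E\, i_E = j_E'\, J_E$. A morphism $A\in\operatorname{Mor}(E_1;E_2)$ is a triple $(A_X,A_H,A_Y)$ of continuous linear maps $A_X\colon X_{E_1}\to X_{E_2}$, $A_H\colon H_{E_1}\to H_{E_2}$, $A_Y\colon Y_{E_1}\to Y_{E_2}$ with $i_{E_2}A_X = A_H i_{E_1}$ and $j_{E_2}A_H=A_Y j_{E_1}$; products are taken componentwise. $E$ is reflexive if $Y_E$ (hence $X_E$) is reflexive. For reflexive $E$, with $\Psi_{Y_E}\colon Y_E\to Y_E''$ the canonical embedding, $K_E\coloneqq J_E'\,\Psi_{Y_E}\colon Y_E\to X_E'$ is the unique Banach isomorphism with $K_E\, j_E = i_E'\, I_E$. For reflexive $E_1,E_2$ the adjoint morphism is $A^*=(A_X^*,A_H^*,A_Y^* )$ with $A_X^*=J_{E_1}^{-1}A_Y'J_{E_2}$, $A_H^*$ the Hilbert adjoint, and $A_Y^*=K_{E_1}^{-1}A_X'K_{E_2}$. A morphism $B\in\operatorname{Mor}(E_2;E_1)$ is a generalized inverse of $A$ if $ABA=A$ and $BAB=B$; it is the pseudoinverse if moreover $A_HB_H$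 and $B_HA_H$ are self-adjoint (orthoprojectors), equivalently $(AB)^*=AB$ and $(BA)^*=BA$. Surjectivity of $A$ means each component is surjective. *)

theory Defs
  imports "HOL-Analysis.Analysis"
begin

definition bounded_linear_on :: "'a::real_normed_vector set \<Rightarrow> ('a \<Rightarrow> 'b::real_normed_vector) \<Rightarrow> bool" where
  "bounded_linear_on S f \<longleftrightarrow>
     (\<forall>x\<in>S. \<forall>y\<in>S. f (x + y) = f x + f y) \<and>
     (\<forall>c. \<forall>x\<in>S. f (c *\<^sub>R x) = c *\<^sub>R f x) \<and>
     (\<exists>C. \<forall>x\<in>S. norm (f x) \<le> C * norm x)"

text \<open>The inner product on H is the one of the ambient type (restricted), so the Riesz map
  I is v \<mapsto> inner v (restricted to H).  The isomorphism J : X \<rightarrow> Y' is given through its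
  pairing J u w = \<langle>J u, w\<rangle>; the dual Y' of the subspace Y consists of the bounded linear
  functionals on Y (identified when they agree on Y).\<close>

definition para_hilbert_on ::
  "'x::banach set \<Rightarrow> 'h::{real_inner,complete_space} set \<Rightarrow> 'y::banach set \<Rightarrow>
   ('x \<Rightarrow> 'h) \<Rightarrow> ('h \<Rightarrow> 'y) \<Rightarrow> ('x \<Rightarrow> 'y \<Rightarrow> real) \<Rightarrow> bool" where
  "para_hilbert_on X H Y i j J \<longleftrightarrow>
     subspace X \<and> closed X \<and> subspace H \<and> closed H \<and> subspace Y \<and> closed Y \<and>
     \<comment> \<open>i : X \<hookrightarrow> H continuous, linear, dense injection\<close>
     i ` X \<subseteq> H \<and> bounded_linear_on X i \<and> inj_on i X \<and> H \<subseteq> closure (i ` X) \<and>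
     \<comment> \<open>j : H \<hookrightarrow> Y continuous, linear, dense injection\<close>
     j ` H \<subseteq> Y \<and> bounded_linear_on H j \<and> inj_on j H \<and> Y \<subseteq> closure (j ` H) \<and>
     \<comment> \<open>J : X \<rightarrow> Y' is a bounded linear map\<close>
     (\<forall>u\<in>X. bounded_linear_on Y (J u)) \<and>
     (\<forall>w\<in>Y. \<forall>u\<in>X. \<forall>u'\<in>X. J (u + u') w = J u w + J u' w) \<and>
     (\<forall>w\<in>Y. \<forall>c. \<forall>u\<in>X. J (c *\<^sub>R u) w = c * J u w) \<and>
     (\<exists>C. \<forall>u\<in>X. \<forall>w\<in>Y. \<bar>J u w\<bar> \<le> C * norm u * norm w) \<and>
     \<comment> \<open>J is injective\<close>
     (\<forall>u\<in>X. (\<forall>w\<in>Y. J u w = 0) \<longrightarrow> u = 0) \<and>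
     \<comment> \<open>J is surjective onto Y'\<close>
     (\<forall>\<phi>. bounded_linear_on Y \<phi> \<longrightarrow> (\<exists>u\<in>X. \<forall>w\<in>Y. J u w = \<phi> w)) \<and>
     \<comment> \<open>J has a bounded inverse: norm u \<le> C * (dual norm of J u)\<close>
     (\<exists>C. \<forall>u\<in>X. \<forall>M\<ge>0. (\<forall>w\<in>Y. \<bar>J u w\<bar> \<le> M * norm w) \<longrightarrow> norm u \<le> C * M) \<and>
     \<comment> \<open>compatibility I i = j' J\<close>
     (\<forall>u\<in>X. \<forall>v\<in>H. inner (i u) v = J u (j v))"

definition para_hilbert ::
  "('x::banach \<Rightarrow>\<^sub>L 'h::{real_inner,complete_space}) \<Rightarrow> ('h \<Rightarrow>\<^sub>L 'y::banach) \<Rightarrow>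
   ('x \<Rightarrow>\<^sub>L ('y \<Rightarrow>\<^sub>L real)) \<Rightarrow> bool" where
  "para_hilbert i j J \<longleftrightarrow>
     para_hilbert_on UNIV UNIV UNIV (blinfun_apply i) (blinfun_apply j) (\<lambda>u w. blinfun_apply (blinfun_apply J u) w)"

definition reflexive_space :: "'y::banach itself \<Rightarrow> bool" where
  "reflexive_space _ \<longleftrightarrow>
     (\<forall>\<Phi> :: ('y \<Rightarrow>\<^sub>L real) \<Rightarrow>\<^sub>L real. \<exists>y::'y. \<forall>\<phi>. blinfun_apply \<Phi> \<phi> = blinfun_apply \<phi> y)"

text \<open>K_E = J_E' \<Psi>_Y : Y \<rightarrow> X', i.e. (K_E w) u = \<langle>J_E u, w\<rangle>.\<close>
definition K_map :: "('x::banach \<Rightarrow>\<^sub>L ('y::banach \<Rightarrow>\<^sub>L real)) \<Rightarrow> 'y \<Rightarrow> ('x \<Rightarrow>\<^sub>L real)" where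
  "K_map J w = Blinfun (\<lambda>u. blinfun_apply (blinfun_apply J u) w)"

definition morphism ::
  "('x1::banach \<Rightarrow>\<^sub>L 'h1::{real_inner,complete_space}) \<Rightarrow> ('h1 \<Rightarrow>\<^sub>L 'y1::banach) \<Rightarrow>
   ('x2::banach \<Rightarrow>\<^sub>L 'h2::{real_inner,complete_space}) \<Rightarrow> ('h2 \<Rightarrow>\<^sub>L 'y2::banach) \<Rightarrow>
   ('x1 \<Rightarrow>\<^sub>L 'x2) \<Rightarrow> ('h1 \<Rightarrow>\<^sub>L 'h2) \<Rightarrow> ('y1 \<Rightarrow>\<^sub>L 'y2) \<Rightarrow> bool" where
  "morphism i1 j1 i2 j2 AX AH AY \<longleftrightarrow>
     i2 o\<^sub>L AX = AH o\<^sub>L i1 \<and> j2 o\<^sub>L AH = AY o\<^sub>L j1"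

definition self_adjoint_op :: "('h::real_inner \<Rightarrow>\<^sub>L 'h) \<Rightarrow> bool" where
  "self_adjoint_op P \<longleftrightarrow> (\<forall>x y. inner (blinfun_apply P x) y = inner x (blinfun_apply P y))"

definition is_pseudoinverse ::
  "('x1::banach \<Rightarrow>\<^sub>L 'h1::{real_inner,complete_space}) \<Rightarrow> ('h1 \<Rightarrow>\<^sub>L 'y1::banach) \<Rightarrow>
   ('x2::banach \<Rightarrow>\<^sub>L 'h2::{real_inner,complete_space}) \<Rightarrow> ('h2 \<Rightarrow>\<^sub>L 'y2::banach) \<Rightarrow>
   ('x1 \<Rightarrow>\<^sub>L 'x2) \<Rightarrow> ('h1 \<Rightarrow>\<^sub>L 'h2) \<Rightarrow> ('y1 \<Rightarrow>\<^sub>L 'y2) \<Rightarrow>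
   ('x2 \<Rightarrow>\<^sub>L 'x1) \<Rightarrow> ('h2 \<Rightarrow>\<^sub>L 'h1) \<Rightarrow> ('y2 \<Rightarrow>\<^sub>L 'y1) \<Rightarrow> bool" where
  "is_pseudoinverse i1 j1 i2 j2 AX AH AY BX BH BY \<longleftrightarrow>
     morphism i2 j2 i1 j1 BX BH BY \<and>
     AX o\<^sub>L BX o\<^sub>L AX = AX \<and> AH o\<^sub>L BH o\<^sub>L AH = AH \<and> AY o\<^sub>L BY o\<^sub>L AY = AY \<and>
     BX o\<^sub>L AX o\<^sub>L BX = BX \<and> BH o\<^sub>L AH o\<^sub>L BH = BH \<and> BY o\<^sub>L AY o\<^sub>L BY = BY \<and>
     self_adjoint_op (AH o\<^sub>L BH) \<and> self_adjoint_op (BH o\<^sub>L AH)"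

definition cont_invertible :: "('a::real_normed_vector \<Rightarrow> 'b::real_normed_vector) \<Rightarrow> bool" where
  "cont_invertible f \<longleftrightarrow> bounded_linear f \<and>
     (\<exists>g. bounded_linear g \<and> (\<forall>x. g (f x) = x) \<and> (\<forall>y. f (g y) = y))"

end

(* The theorem reduces to pairs of right inverses BX, BY of AX, AY whose ranges annihilate the
   kernels of AY and AX under the pairing J1. The X- and Y-components of a pseudoinverse form such
   a pair, since BH AH is an orthoprojector and the injections are dense. Conversely, a pair
   determines BH as the continuous extension of i1 BX through i2: its range is orthogonal to
   ker AH, so it is the minimal-norm right inverse of AH, bounded by the open mapping theorem.
   For such a pair the projections 1 - BX AX and 1 - BY AY are adjoint under J1, which lets one
   solve either block system explicitly; the bounded inverse theorem gives continuity. Conversely,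
   the entries of the inverse of a block operator yield such a pair. The same projections carry
   the density of the injections and the duality J1 over to the kernels. *)

theory Submission
  imports Defs
begin

section \<open>Hahn--Banach\<close>

(* Graphs of linear functionals on subspaces, dominated by the norm and taking the value norm x0
   at x0; a maximal one (Zorn) is the graph of a norming functional. *)
definition dominated_linear_graph :: "'a::real_normed_vector \<Rightarrow> ('a \<times> real) set \<Rightarrow> bool" where
  "dominated_linear_graph x0 G \<longleftrightarrow> (x0, norm x0) \<in> G \<and>
     (\<forall>(x, a)\<in>G. \<forall>(x', a')\<in>G. \<forall>c d. (c *\<^sub>R x + d *\<^sub>R x', c * a + d * a') \<in> G) \<and>
     (\<forall>(x, a)\<in>G. a \<le> norm x)"

lemma dominated_linear_graphI:
  assumes "(x0, norm x0) \<in> G"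
    and "\<And>x a x' a' c d. (x, a) \<in> G \<Longrightarrow> (x', a') \<in> G \<Longrightarrow> (c *\<^sub>R x + d *\<^sub>R x', c * a + d * a') \<in> G"
    and "\<And>x a. (x, a) \<in> G \<Longrightarrow> a \<le> norm x"
  shows "dominated_linear_graph x0 G"
  using assms unfolding dominated_linear_graph_def by auto

lemma dominated_linear_graph_base: "dominated_linear_graph x0 G \<Longrightarrow> (x0, norm x0) \<in> G"
  unfolding dominated_linear_graph_def by blast

lemma dominated_linear_graph_combination:
  "dominated_linear_graph x0 G \<Longrightarrow> (x, a) \<in> G \<Longrightarrow> (x', a') \<in> G \<Longrightarrow>
     (c *\<^sub>R x + d *\<^sub>R x', c * a + d * a') \<in> G"
  unfolding dominated_linear_graph_def by blast

lemma dominated_linear_graph_le_norm: "dominated_linear_graph x0 G \<Longrightarrow> (x, a) \<in> G \<Longrightarrow> a \<le> norm x"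
  unfolding dominated_linear_graph_def by blast

lemma dominated_linear_graph_scaleR:
  "dominated_linear_graph x0 G \<Longrightarrow> (x, a) \<in> G \<Longrightarrow> (c *\<^sub>R x, c * a) \<in> G"
  using dominated_linear_graph_combination[of x0 G x a x a c 0] by simp

lemma dominated_linear_graph_single_valued:
  assumes G: "dominated_linear_graph x0 G" and "(x, a) \<in> G" "(x, b) \<in> G"
  shows "a = b"
proof -
  have "(0, a - b) \<in> G" "(0, b - a) \<in> G"
    using dominated_linear_graph_combination[OF G assms(2,3), of 1 "-1"]
      dominated_linear_graph_combination[OF G assms(3,2), of 1 "-1"] by simp_all
  from this[THEN dominated_linear_graph_le_norm[OF G]] show ?thesis by simp
qed

lemma dominated_linear_graph_line: "dominated_linear_graph x0 {(t *\<^sub>R x0, t * norm x0) | t. True}"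
proof (rule dominated_linear_graphI)
  show "(x0, norm x0) \<in> {(t *\<^sub>R x0, t * norm x0) | t. True}" by (auto intro: exI[of _ 1])
next
  fix x a x' a' and c d :: real
  assume "(x, a) \<in> {(t *\<^sub>R x0, t * norm x0) | t. True}" "(x', a') \<in> {(t *\<^sub>R x0, t * norm x0) | t. True}"
  then obtain s t where "x = s *\<^sub>R x0" "a = s * norm x0" "x' = t *\<^sub>R x0" "a' = t * norm x0" by blast
  thus "(c *\<^sub>R x + d *\<^sub>R x', c * a + d * a') \<in> {(t *\<^sub>R x0, t * norm x0) | t. True}"
    by (intro CollectI exI[of _ "c * s + d * t"]) (simp add: algebra_simps)
next
  fix x a assume "(x, a) \<in> {(t *\<^sub>R x0, t * norm x0) | t. True}"
  thus "a \<le> norm x" by (auto simp: mult_right_mono)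
qed

lemma dominated_linear_graph_slope:
  assumes M: "dominated_linear_graph x0 M"
  obtains c where "\<And>x a. (x, a) \<in> M \<Longrightarrow> a - norm (x - y) \<le> c"
    and "\<And>x a. (x, a) \<in> M \<Longrightarrow> c \<le> norm (x + y) - a"
proof
  define L where "L = (\<lambda>(x, a). a - norm (x - y)) ` M"
  have L_le: "l \<le> norm (x + y) - a" if "l \<in> L" "(x, a) \<in> M" for l x a
  proof -
    from that obtain x' a' where "(x', a') \<in> M" "l = a' - norm (x' - y)" unfolding L_def by auto
    moreover from this have "a + a' \<le> norm (x + x')"
      using dominated_linear_graph_combination[OF M that(2), of x' a' 1 1]
        dominated_linear_graph_le_norm[OF M] by simp
    moreover have "norm (x + x') \<le> norm (x + y) + norm (x' - y)"
      using norm_triangle_ineq[of "x + y" "x' - y"] by simp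
    ultimately show ?thesis by simp
  qed
  have "L \<noteq> {}" using dominated_linear_graph_base[OF M] unfolding L_def by blast
  moreover have "bdd_above L" using L_le dominated_linear_graph_base[OF M] by (meson bdd_aboveI)
  ultimately show "a - norm (x - y) \<le> Sup L" "Sup L \<le> norm (x + y) - a" if "(x, a) \<in> M" for x a
  proof -
    show "a - norm (x - y) \<le> Sup L"
      using \<open>bdd_above L\<close> that by (intro cSup_upper) (force simp: L_def)
    show "Sup L \<le> norm (x + y) - a"
      using \<open>L \<noteq> {}\<close> L_le that by (intro cSup_least) auto
  qed
qed

lemma dominated_linear_graph_slope_le_norm:
  assumes M: "dominated_linear_graph x0 M" and xa: "(x, a) \<in> M"
    and lo: "\<And>x a. (x, a) \<in> M \<Longrightarrow> a - norm (x - y) \<le> c"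
    and hi: "\<And>x a. (x, a) \<in> M \<Longrightarrow> c \<le> norm (x + y) - a"
  shows "a + t * c \<le> norm (x + t *\<^sub>R y)"
proof (cases t "0::real" rule: linorder_cases)
  case equal thus ?thesis using dominated_linear_graph_le_norm[OF M xa] by simp
next
  case greater
  have "t * c \<le> t * (norm ((1/t) *\<^sub>R x + y) - (1/t) * a)"
    using hi[OF dominated_linear_graph_scaleR[OF M xa, of "1/t"]] greater by (intro mult_left_mono) auto
  also have "\<dots> = norm (t *\<^sub>R ((1/t) *\<^sub>R x + y)) - a"
    using greater by (simp add: right_diff_distrib)
  also have "t *\<^sub>R ((1/t) *\<^sub>R x + y) = x + t *\<^sub>R y"
    using greater by (simp add: algebra_simps)
  finally show ?thesis by simp
next
  case less
  have "(-t) * c \<ge> (-t) * ((-1/t) * a - norm ((-1/t) *\<^sub>R x - y))"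
    using lo[OF dominated_linear_graph_scaleR[OF M xa, of "-1/t"]] less by (intro mult_left_mono) simp_all
  also have "(-t) * ((-1/t) * a - norm ((-1/t) *\<^sub>R x - y)) = a - norm ((-t) *\<^sub>R ((-1/t) *\<^sub>R x - y))"
    using less by (simp add: right_diff_distrib)
  also have "(-t) *\<^sub>R ((-1/t) *\<^sub>R x - y) = x + t *\<^sub>R y"
    using less by (simp add: algebra_simps)
  finally show ?thesis by simp
qed

lemma dominated_linear_graph_extend:
  assumes M: "dominated_linear_graph x0 M" and y: "\<forall>a. (y, a) \<notin> M"
  shows "\<exists>M'. dominated_linear_graph x0 M' \<and> M \<subset> M'"
proof -
  obtain c where lo: "\<And>x a. (x, a) \<in> M \<Longrightarrow> a - norm (x - y) \<le> c"
    and hi: "\<And>x a. (x, a) \<in> M \<Longrightarrow> c \<le> norm (x + y) - a"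
    using dominated_linear_graph_slope[OF M] by blast
  define M' where "M' = {(x + t *\<^sub>R y, a + t * c) | x a t. (x, a) \<in> M}"
  have "dominated_linear_graph x0 M'"
  proof (rule dominated_linear_graphI)
    show "(x0, norm x0) \<in> M'"
      unfolding M'_def using dominated_linear_graph_base[OF M] by force
  next
    fix z b z' b' and e f :: real
    assume "(z, b) \<in> M'" "(z', b') \<in> M'"
    then obtain x a t x' a' t' where "(x, a) \<in> M" "(x', a') \<in> M"
      and z: "z = x + t *\<^sub>R y" "b = a + t * c" "z' = x' + t' *\<^sub>R y" "b' = a' + t' * c"
      unfolding M'_def by blast
    hence "(e *\<^sub>R x + f *\<^sub>R x', e * a + f * a') \<in> M"
      by (intro dominated_linear_graph_combination[OF M])
    thus "(e *\<^sub>R z + f *\<^sub>R z', e * b + f * b') \<in> M'"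
      unfolding M'_def z
      by (intro CollectI exI[of _ "e *\<^sub>R x + f *\<^sub>R x'"] exI[of _ "e * a + f * a'"] exI[of _ "e * t + f * t'"])
         (simp add: algebra_simps)
  next
    fix z b assume "(z, b) \<in> M'"
    thus "b \<le> norm z"
      unfolding M'_def using dominated_linear_graph_slope_le_norm[OF M _ lo hi] by blast
  qed
  moreover have "M \<subseteq> M'" unfolding M'_def by force
  moreover have "(y, c) \<in> M'"
    using dominated_linear_graph_scaleR[OF M dominated_linear_graph_base[OF M], of 0]
    unfolding M'_def by force
  ultimately show ?thesis using y by blast
qed

lemma dominated_linear_graph_chain_Union:
  assumes C: "C \<in> chains {G. dominated_linear_graph x0 G}" and "C \<noteq> {}"
  shows "dominated_linear_graph x0 (\<Union>C)"
proof (rule dominated_linear_graphI)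
  obtain G0 where "G0 \<in> C" using \<open>C \<noteq> {}\<close> by blast
  thus "(x0, norm x0) \<in> \<Union>C" using C chainsD2 dominated_linear_graph_base by blast
next
  fix x a assume "(x, a) \<in> \<Union>C"
  then obtain G where "G \<in> C" "(x, a) \<in> G" by blast
  thus "a \<le> norm x" using C chainsD2 dominated_linear_graph_le_norm by blast
next
  fix x a x' a' c d assume "(x, a) \<in> \<Union>C" "(x', a') \<in> \<Union>C"
  then obtain G G' where GG': "G \<in> C" "G' \<in> C" "(x, a) \<in> G" "(x', a') \<in> G'" by blast
  have "G \<subseteq> G' \<or> G' \<subseteq> G" using chainsD[OF C GG'(1,2)] .
  then obtain H where "H \<in> C" "(x, a) \<in> H" "(x', a') \<in> H" using GG' by blast
  moreover have "dominated_linear_graph x0 H" using C chainsD2 \<open>H \<in> C\<close> by blast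
  ultimately show "(c *\<^sub>R x + d *\<^sub>R x', c * a + d * a') \<in> \<Union>C"
    by (blast intro: dominated_linear_graph_combination)
qed

lemma total_dominated_linear_graph:
  obtains M where "dominated_linear_graph x0 M" "\<And>x. \<exists>a. (x, a) \<in> M"
proof -
  have "\<exists>M\<in>{G. dominated_linear_graph x0 G}. \<forall>G\<in>{G. dominated_linear_graph x0 G}. M \<subseteq> G \<longrightarrow> G = M"
  proof (rule Zorn_Lemma2, rule ballI)
    fix C assume "C \<in> chains {G. dominated_linear_graph x0 G}"
    thus "\<exists>U\<in>{G. dominated_linear_graph x0 G}. \<forall>G\<in>C. G \<subseteq> U"
    proof (cases "C = {}")
      case True thus ?thesis using dominated_linear_graph_line[of x0] by blast
    next
      case False thus ?thesis using dominated_linear_graph_chain_Union[OF \<open>C \<in> _\<close>] by blast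
    qed
  qed
  then obtain M where M: "dominated_linear_graph x0 M"
    and max: "\<And>G. dominated_linear_graph x0 G \<Longrightarrow> M \<subseteq> G \<Longrightarrow> G = M" by blast
  have "\<exists>a. (x, a) \<in> M" for x
    using dominated_linear_graph_extend[OF M, of x] max by blast
  thus ?thesis using that M by blast
qed

theorem hahn_banach_norming:
  fixes x0 :: "'a::real_normed_vector"
  obtains \<phi> :: "'a \<Rightarrow>\<^sub>L real" where "norm \<phi> \<le> 1" "\<phi> x0 = norm x0"
proof -
  obtain M where M: "dominated_linear_graph x0 M" and total: "\<And>x. \<exists>a. (x, a) \<in> M"
    using total_dominated_linear_graph by blast
  from total obtain f where f: "\<And>x. (x, f x) \<in> M" by metis
  have f_eq: "f x = a" if "(x, a) \<in> M" for x a
    using dominated_linear_graph_single_valued[OF M f that] .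
  have f_comb: "f (c *\<^sub>R x + d *\<^sub>R y) = c * f x + d * f y" for c d x y
    by (rule f_eq, rule dominated_linear_graph_combination[OF M f f])
  have f_abs: "\<bar>f x\<bar> \<le> norm x" for x
    using dominated_linear_graph_le_norm[OF M f, of x] dominated_linear_graph_le_norm[OF M f, of "-x"]
      f_comb[of "-1" x 0 x] by simp
  have bl: "bounded_linear f"
  proof (rule bounded_linear_intro[of _ 1])
    show "f (x + y) = f x + f y" for x y using f_comb[of 1 x 1 y] by simp
    show "f (c *\<^sub>R x) = c *\<^sub>R f x" for c x using f_comb[of c x 0 x] by simp
    show "norm (f x) \<le> norm x * 1" for x using f_abs by simp
  qed
  show ?thesis
  proof
    show "norm (Blinfun f) \<le> 1"
      by (rule norm_blinfun_bound) (auto simp: bounded_linear_Blinfun_apply[OF bl] f_abs)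
    show "Blinfun f x0 = norm x0"
      using f_eq[OF dominated_linear_graph_base[OF M]] by (simp add: bounded_linear_Blinfun_apply[OF bl])
  qed
qed

corollary functionals_separate_points:
  fixes w :: "'a::real_normed_vector"
  assumes "\<And>\<phi>::'a \<Rightarrow>\<^sub>L real. \<phi> w = 0"
  shows "w = 0"
proof -
  obtain \<phi> :: "'a \<Rightarrow>\<^sub>L real" where "\<phi> w = norm w" using hahn_banach_norming by blast
  thus ?thesis using assms[of \<phi>] by simp
qed

section \<open>The open mapping theorem\<close>

lemma complete_space_Baire:
  fixes F :: "nat \<Rightarrow> 'a::complete_space set"
  assumes "\<And>n. closed (F n)" and "(\<Union>n. F n) = UNIV"
  obtains n where "interior (F n) \<noteq> {}"
proof -
  have "euclidean interior_of \<Union>(range F) \<noteq> {}" using assms(2) by simp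
  then obtain n where "euclidean interior_of F n \<noteq> {}"
    using Baire_category_alt[of euclidean "range F"] completely_metrizable_space_euclidean assms(1)
    by auto
  thus ?thesis using that by simp
qed

lemma ball_in_closure_image_cball:
  fixes f :: "'a::real_normed_vector \<Rightarrow> 'b::{real_normed_vector,complete_space}"
  assumes "surj f"
  obtains y0 r R where "r > 0" "ball y0 r \<subseteq> closure (f ` cball 0 R)"
proof -
  have "(\<Union>n::nat. closure (f ` cball 0 (real n))) = UNIV"
  proof (intro set_eqI iffI UNIV_I)
    fix y :: 'b
    obtain x where "y = f x" using assms by (metis surjD)
    moreover obtain n :: nat where "norm x \<le> real n" using real_arch_simple by blast
    ultimately show "y \<in> (\<Union>n. closure (f ` cball 0 (real n)))" using closure_subset by fastforce
  qed
  then obtain n :: nat where "interior (closure (f ` cball 0 (real n))) \<noteq> {}"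
    by (rule complete_space_Baire[rotated]) auto
  then obtain y0 r where "r > 0" "ball y0 r \<subseteq> closure (f ` cball 0 (real n))"
    using mem_interior by blast
  thus ?thesis using that by blast
qed

lemma approximate_preimage_in_ball:
  assumes "bounded_linear f" and ball: "ball y0 r \<subseteq> closure (f ` cball 0 R)" and "norm y < r" and "e > 0"
  obtains x where "norm x \<le> 2 * R" "norm (y - f x) < e"
proof -
  have "r > 0" using \<open>norm y < r\<close> norm_ge_zero[of y] by linarith
  have "e/2 > 0" using \<open>e > 0\<close> by simp
  have "y0 + y \<in> closure (f ` cball 0 R)" "y0 \<in> closure (f ` cball 0 R)"
    using \<open>r > 0\<close> \<open>norm y < r\<close> by (auto intro!: subsetD[OF ball] simp: dist_norm)
  hence "\<exists>z\<in>f ` cball 0 R. dist z (y0 + y) < e/2" "\<exists>z\<in>f ` cball 0 R. dist z y0 < e/2"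
    unfolding closure_approachable using \<open>e/2 > 0\<close> by blast+
  then obtain x1 x2 where x: "norm x1 \<le> R" "dist (f x1) (y0 + y) < e/2" "norm x2 \<le> R" "dist (f x2) y0 < e/2"
    by auto
  have "norm (x1 - x2) \<le> 2 * R" using norm_triangle_ineq4[of x1 x2] x by simp
  moreover have "norm (y - f (x1 - x2)) < e"
  proof -
    have "y - f (x1 - x2) = (y0 + y - f x1) - (y0 - f x2)"
      using linear_diff[OF bounded_linear.linear[OF assms(1)]] by (simp add: algebra_simps)
    hence "norm (y - f (x1 - x2)) \<le> norm (y0 + y - f x1) + norm (y0 - f x2)"
      using norm_triangle_ineq4 by metis
    also have "\<dots> < e/2 + e/2" using x by (intro add_strict_mono) (auto simp: dist_norm norm_minus_commute)
    finally show ?thesis by simp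
  qed
  ultimately show ?thesis using that by blast
qed

lemma open_mapping_approximate:
  fixes f :: "'a::real_normed_vector \<Rightarrow> 'b::{real_normed_vector,complete_space}"
  assumes "bounded_linear f" "surj f"
  obtains K where "K > 0" "\<And>y. \<exists>x. norm x \<le> K * norm y \<and> norm (y - f x) \<le> norm y / 2"
proof -
  obtain y0 r R where r: "r > 0" and ball: "ball y0 r \<subseteq> closure (f ` cball 0 R)"
    using ball_in_closure_image_cball[OF assms(2)] .
  define K where "K = 4 * \<bar>R\<bar> / r + 1"
  have "K > 0" using r by (simp add: K_def add_nonneg_pos)
  moreover have "\<exists>x. norm x \<le> K * norm y \<and> norm (y - f x) \<le> norm y / 2" for y
  proof (cases "y = 0")
    case True thus ?thesis by (intro exI[of _ 0]) (simp add: linear_0[OF bounded_linear.linear[OF assms(1)]])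
  next
    case False
    define s where "s = (r/2) / norm y"
    have s: "s > 0" "norm (s *\<^sub>R y) < r" using r False by (simp_all add: s_def)
    obtain x' where x': "norm x' \<le> 2 * R" "norm (s *\<^sub>R y - f x') < s * (norm y / 2)"
      using approximate_preimage_in_ball[OF assms(1) ball s(2), of "s * (norm y / 2)"] s False by auto
    have "norm ((1/s) *\<^sub>R x') \<le> 2 * \<bar>R\<bar> / s" using x' s by (simp add: divide_right_mono)
    also have "\<dots> = 4 * \<bar>R\<bar> / r * norm y" using r False by (simp add: s_def field_simps)
    also have "\<dots> \<le> K * norm y" by (simp add: K_def distrib_right)
    finally have "norm ((1/s) *\<^sub>R x') \<le> K * norm y" .
    moreover have "s *\<^sub>R (y - f ((1/s) *\<^sub>R x')) = s *\<^sub>R y - f x'"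
      using s by (simp add: linear_scale[OF bounded_linear.linear[OF assms(1)]] algebra_simps)
    hence "s * norm (y - f ((1/s) *\<^sub>R x')) < s * (norm y / 2)"
      using x'(2) s(1) by (metis abs_of_pos norm_scaleR)
    hence "norm (y - f ((1/s) *\<^sub>R x')) \<le> norm y / 2" using s(1) by simp
    ultimately show ?thesis by blast
  qed
  ultimately show ?thesis using that by blast
qed

lemma summable_norm_cancel_complete:
  fixes f :: "nat \<Rightarrow> 'a::{real_normed_vector,complete_space}"
  assumes summable: "summable (\<lambda>n. norm (f n))"
  shows "summable f"
proof (rule summable_bounded_partials[where g = "\<lambda>a. (\<Sum>n. norm (f n)) - (\<Sum>k\<le>a. norm (f k))"])
  show "\<forall>\<^sub>F a0 in sequentially. \<forall>a\<ge>a0. \<forall>b>a.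
      norm (sum f {a<..b}) \<le> (\<Sum>n. norm (f n)) - (\<Sum>k\<le>a. norm (f k))"
  proof (intro always_eventually allI impI)
    fix a b :: nat assume "a < b"
    have "norm (sum f {a<..b}) \<le> (\<Sum>k\<in>{a<..b}. norm (f k))" by (rule norm_sum)
    also have "\<dots> = (\<Sum>k\<le>b. norm (f k)) - (\<Sum>k\<le>a. norm (f k))"
      using \<open>a < b\<close> by (subst sum_diff[symmetric]) (auto intro!: sum.cong)
    also have "(\<Sum>k\<le>b. norm (f k)) \<le> (\<Sum>n. norm (f n))"
      using summable by (intro sum_le_suminf) auto
    finally show "norm (sum f {a<..b}) \<le> (\<Sum>n. norm (f n)) - (\<Sum>k\<le>a. norm (f k))" by simp
  qed
  show "(\<lambda>a. (\<Sum>n. norm (f n)) - (\<Sum>k\<le>a. norm (f k))) \<longlonglongrightarrow> 0"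
    using tendsto_diff[OF tendsto_const[of "\<Sum>n. norm (f n)"] summable_LIMSEQ'[OF summable]] by simp
qed

lemma summable_dominated_complete:
  fixes f :: "nat \<Rightarrow> 'a::{real_normed_vector,complete_space}"
  assumes le: "\<And>n. norm (f n) \<le> g n" and g: "g sums s"
  shows "summable f" and "norm (suminf f) \<le> s"
proof -
  have g_nonneg: "0 \<le> g n" for n by (rule order_trans[OF norm_ge_zero le])
  have "summable (\<lambda>n. norm (f n))"
    by (rule summable_comparison_test[OF _ sums_summable[OF g]]) (simp add: le)
  thus "summable f" by (rule summable_norm_cancel_complete)
  have "norm (\<Sum>k<n. f k) \<le> s" for n
  proof -
    have "norm (\<Sum>k<n. f k) \<le> (\<Sum>k<n. g k)" by (rule order_trans[OF norm_sum sum_mono[OF le]])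
    also have "\<dots> \<le> suminf g" by (rule sum_le_suminf[OF sums_summable[OF g]]) (simp_all add: g_nonneg)
    finally show ?thesis by (simp add: sums_unique[OF g, symmetric])
  qed
  thus "norm (suminf f) \<le> s"
    by (intro LIMSEQ_le_const2[OF tendsto_norm[OF summable_LIMSEQ[OF \<open>summable f\<close>]]]) auto
qed

(* The iterates r (n+1) = r n - f (sel (r n)) decay geometrically, and the sel (r n) sum to a preimage. *)
lemma preimage_by_successive_approximation:
  fixes f :: "'a::{real_normed_vector,complete_space} \<Rightarrow> 'b::real_normed_vector"
  assumes "bounded_linear f" and "K \<ge> 0"
    and sel: "\<And>y. norm (sel y) \<le> K * norm y" "\<And>y. norm (y - f (sel y)) \<le> norm y / 2"
  shows "\<exists>x. f x = y \<and> norm x \<le> 2 * K * norm y"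
proof -
  interpret f: bounded_linear f by fact
  define r where "r = rec_nat y (\<lambda>_ z. z - f (sel z))"
  have r0: "r 0 = y" and r_Suc: "r (Suc n) = r n - f (sel (r n))" for n
    unfolding r_def by simp_all
  have r_le: "norm (r n) \<le> norm y * (1/2)^n" for n
  proof (induction n)
    case (Suc n) thus ?case using sel(2)[of "r n"] by (simp add: r_Suc)
  qed (simp add: r0)
  have "r \<longlonglongrightarrow> 0"
  proof (rule tendsto_norm_zero_cancel, rule Lim_null_comparison)
    show "\<forall>\<^sub>F n in sequentially. norm (norm (r n)) \<le> norm y * (1/2)^n" using r_le by simp
    show "(\<lambda>n. norm y * (1/2::real)^n) \<longlonglongrightarrow> 0"
      by (intro tendsto_mult_right_zero LIMSEQ_power_zero) simp
  qed
  hence f_sums: "(\<lambda>n. f (sel (r n))) sums y"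
    using telescope_sums'[of r 0] by (simp add: r0 r_Suc)
  have sel_le: "norm (sel (r n)) \<le> K * norm y * (1/2)^n" for n
    using order_trans[OF sel(1) mult_left_mono[OF r_le]] \<open>K \<ge> 0\<close> by (simp add: ac_simps)
  have geom: "(\<lambda>n. K * norm y * (1/2::real)^n) sums (2 * K * norm y)"
    using sums_mult[OF geometric_sums[of "1/2::real"], of "K * norm y"] by (simp add: ac_simps)
  have "f (\<Sum>n. sel (r n)) = y"
    using sums_unique2[OF f.sums[OF summable_sums[OF summable_dominated_complete(1)[OF sel_le geom]]] f_sums] .
  thus ?thesis using summable_dominated_complete(2)[OF sel_le geom] by blast
qed

theorem open_mapping:
  fixes f :: "'a::{real_normed_vector,complete_space} \<Rightarrow> 'b::{real_normed_vector,complete_space}"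
  assumes "bounded_linear f" "surj f"
  obtains K where "K > 0" "\<And>y. \<exists>x. f x = y \<and> norm x \<le> K * norm y"
proof -
  obtain K where K: "K > 0" "\<And>y. \<exists>x. norm x \<le> K * norm y \<and> norm (y - f x) \<le> norm y / 2"
    using open_mapping_approximate[OF assms] by blast
  then obtain sel where sel: "\<And>y. norm (sel y) \<le> K * norm y" "\<And>y. norm (y - f (sel y)) \<le> norm y / 2"
    by metis
  have "\<exists>x. f x = y \<and> norm x \<le> (2 * K) * norm y" for y
    using preimage_by_successive_approximation[OF assms(1) less_imp_le[OF K(1)] sel] .
  thus ?thesis using that[of "2 * K"] K(1) by simp
qed

theorem bounded_linear_inv:
  fixes f :: "'a::banach \<Rightarrow> 'b::banach"
  assumes "bounded_linear f" "bij f"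
  shows "bounded_linear (inv f)"
proof -
  obtain K where K: "\<And>y. \<exists>x. f x = y \<and> norm x \<le> K * norm y"
    using open_mapping[OF assms(1) bij_is_surj[OF assms(2)]] by blast
  interpret f: bounded_linear f by fact
  have inv_f: "inv f (f x) = x" "f (inv f y) = y" for x y
    using assms(2) by (simp_all add: bij_is_inj bij_is_surj surj_f_inv_f)
  show ?thesis
  proof (rule bounded_linear_intro[of _ K])
    show "inv f (a + b) = inv f a + inv f b" for a b
      by (metis f.add inv_f)
    show "inv f (c *\<^sub>R a) = c *\<^sub>R inv f a" for c a
      by (metis f.scaleR inv_f)
    show "norm (inv f y) \<le> norm y * K" for y
      using K[of y] inv_f by (metis mult.commute)
  qed
qed

lemma cont_invertible_if_bij:
  fixes f :: "'a::banach \<Rightarrow> 'b::banach"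
  assumes "bounded_linear f" "bij f"
  shows "cont_invertible f"
  unfolding cont_invertible_def
  using assms bounded_linear_inv[OF assms] by (metis bij_inv_eq_iff)

section \<open>Extension by continuity and orthogonality\<close>

lemma continuous_eq_on_dense:
  fixes f g :: "'a::topological_space \<Rightarrow> 'b::t2_space"
  assumes "closure S = UNIV" "continuous_on UNIV f" "continuous_on UNIV g" "\<And>x. x \<in> S \<Longrightarrow> f x = g x"
  shows "f x = g x"
proof -
  have "closure S \<subseteq> {x. f x = g x}"
    using assms(2-4) by (intro closure_minimal closed_Collect_eq) auto
  thus ?thesis using assms(1) by auto
qed

lemma blinfun_eq_on_dense:
  fixes f g :: "'a::real_normed_vector \<Rightarrow>\<^sub>L 'b::real_normed_vector"
  assumes "closure S = UNIV" "\<And>x. x \<in> S \<Longrightarrow> f x = g x"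
  shows "f = g"
  by (rule blinfun_eqI, rule continuous_eq_on_dense[OF assms(1)]) (simp_all add: assms(2) linear_continuous_on blinfun.bounded_linear_right)

lemma linear_if_continuous_through_dense_range:
  fixes p :: "'c::real_normed_vector \<Rightarrow> 'a::real_normed_vector" and q :: "'c \<Rightarrow> 'b::real_normed_vector"
  assumes p: "bounded_linear p" and q: "bounded_linear q" and dense: "closure (range p) = UNIV"
    and cont: "continuous_on UNIV g" and gp: "\<And>c. g (p c) = q c"
  shows "linear g"
proof -
  interpret p: bounded_linear p by fact
  interpret q: bounded_linear q by fact
  have add: "g (x + y) = g x + g y" for x y
  proof -
    have "(\<lambda>z. g (fst z + snd z)) (x, y) = (\<lambda>z. g (fst z) + g (snd z)) (x, y)"
    proof (rule continuous_eq_on_dense[of "range p \<times> range p"])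
      show "closure (range p \<times> range p) = UNIV" using dense by (simp add: closure_Times)
      show "continuous_on UNIV (\<lambda>z. g (fst z + snd z))" "continuous_on UNIV (\<lambda>z. g (fst z) + g (snd z))"
        by (intro continuous_intros continuous_on_compose2[OF cont]; simp)+
    qed (auto simp: p.add[symmetric] gp q.add)
    thus ?thesis by simp
  qed
  have scale: "g (r *\<^sub>R x) = r *\<^sub>R g x" for r x
    by (rule continuous_eq_on_dense[OF dense], (intro continuous_intros continuous_on_compose2[OF cont]; simp)+)
      (auto simp: p.scaleR[symmetric] gp q.scaleR)
  show ?thesis using add scale by (rule linearI)
qed

lemma blinfun_extend_dense_range:
  fixes p :: "'c::real_normed_vector \<Rightarrow> 'a::real_normed_vector" and q :: "'c \<Rightarrow> 'b::{real_normed_vector,complete_space}"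
  assumes p: "bounded_linear p" and q: "bounded_linear q" and dense: "closure (range p) = UNIV"
    and bound: "\<And>c. norm (q c) \<le> C * norm (p c)"
  obtains g :: "'a \<Rightarrow>\<^sub>L 'b" where "\<And>c. g (p c) = q c"
proof -
  interpret p: bounded_linear p by fact
  interpret q: bounded_linear q by fact
  define C' where "C' = max C 0"
  have bound': "norm (q c) \<le> C' * norm (p c)" for c
    using bound[of c] unfolding C'_def by (meson max.cobounded1 mult_right_mono norm_ge_zero order_trans)
  have "\<exists>f. \<forall>c. f (p c) = q c"
  proof (intro exI allI)
    fix c
    have "q c = q c'" if "p c = p c'" for c c'
      using bound'[of "c - c'"] that by (simp add: p.diff q.diff)
    thus "q (SOME c'. p c' = p c) = q c" by (metis (mono_tags) someI_ex)
  qed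
  then obtain f where fp: "\<And>c. f (p c) = q c" by blast
  have "C'-lipschitz_on (range p) f"
    using bound' by (intro lipschitz_onI) (auto simp: C'_def dist_norm fp p.diff[symmetric] q.diff[symmetric])
  then obtain g where lip: "C'-lipschitz_on UNIV g" and gp: "\<And>c. g (p c) = q c"
    using lipschitz_extend_closure[of C' "range p" f] dense fp by auto
  have "linear g"
    using linear_if_continuous_through_dense_range[OF p q dense lipschitz_on_continuous_on[OF lip] gp] .
  moreover have "norm (g x) \<le> norm x * C'" for x
    using lipschitz_onD[OF lip, of x 0] gp[of 0] by (simp add: dist_norm ac_simps)
  ultimately have "bounded_linear g"
    by (intro bounded_linear_intro[of _ C']) (simp_all add: linear_add linear_scale)
  thus ?thesis using that[of "Blinfun g"] by (simp add: bounded_linear_Blinfun_apply gp)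
qed

lemma norm_le_if_orthogonal_to_kernel:
  fixes A :: "'a::real_inner \<Rightarrow> 'b::real_vector"
  assumes "linear A" and orth: "\<And>h. A h = 0 \<Longrightarrow> inner v h = 0" and "A x = A v"
  shows "norm v \<le> norm x"
proof -
  have "inner v (v - x) = 0" using assms by (intro orth) (simp add: linear_diff)
  hence "norm v * norm v = inner v x" by (simp add: inner_diff_right flip: power2_eq_square power2_norm_eq_inner)
  also have "\<dots> \<le> norm v * norm x" using Cauchy_Schwarz_ineq2[of v x] by simp
  finally have "norm v * norm v \<le> norm v * norm x" .
  thus ?thesis by (cases "v = 0") simp_all
qed

lemma orthogonal_right_inverse_self_adjoint:
  fixes A :: "'a::real_inner \<Rightarrow> 'b::real_vector"
  assumes "linear A" and right: "\<And>v. A (B v) = v" and orth: "\<And>v h. A h = 0 \<Longrightarrow> inner (B v) h = 0"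
  shows "inner (B (A x)) y = inner x (B (A y))"
proof -
  have ker: "A (z - B (A z)) = 0" for z using assms(1) by (simp add: linear_diff right)
  have "inner (B (A x)) y = inner (B (A x)) (B (A y))"
    using orth[OF ker[of y], of "A x"] by (simp add: inner_diff_right)
  also have "\<dots> = inner x (B (A y))"
    using orth[OF ker[of x], of "A y"] by (simp add: inner_diff_right inner_commute)
  finally show ?thesis .
qed

lemma blinfun_compose_cancel_surj:
  assumes "surj (blinfun_apply A)" and "\<mu> o\<^sub>L A = 0"
  shows "\<mu> = 0"
proof (rule blinfun_eqI)
  fix y
  obtain x where "A x = y" using assms(1) by (metis surjD)
  thus "\<mu> y = blinfun_apply 0 y" using arg_cong[OF assms(2), of "\<lambda>F. F x"] by simp
qed

lemma subspace_blinfun_kernel: "subspace {x. blinfun_apply f x = 0}"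
  unfolding subspace_def by (simp add: blinfun.add_right blinfun.scaleR_right)

lemma closed_blinfun_kernel: "closed {x. blinfun_apply f x = 0}"
  by (intro closed_Collect_eq continuous_intros)

lemma abs_blinfun_apply2_le: "\<bar>blinfun_apply (blinfun_apply J u) w\<bar> \<le> norm J * norm u * norm w"
proof -
  have "\<bar>J u w\<bar> \<le> norm (J u) * norm w" using norm_blinfun[of "J u" w] by simp
  also have "\<dots> \<le> norm J * norm u * norm w" by (intro mult_right_mono norm_blinfun) simp
  finally show ?thesis .
qed

lemma subset_closure_image_if_retraction:
  fixes L :: "'p::real_normed_vector \<Rightarrow>\<^sub>L 'p" and e :: "'q::real_normed_vector \<Rightarrow>\<^sub>L 'p"
  assumes "closure (range e) = UNIV" "\<And>h. h \<in> N \<Longrightarrow> L h = h" "\<And>u. L (e u) \<in> e ` M"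
  shows "N \<subseteq> closure (e ` M)"
proof
  fix h assume "h \<in> N"
  have "L ` closure (range e) \<subseteq> closure (e ` M)"
    by (rule image_closure_subset) (auto intro: continuous_intros assms(3) subsetD[OF closure_subset])
  thus "h \<in> closure (e ` M)" using assms(1) assms(2)[OF \<open>h \<in> N\<close>] by (metis rangeI subsetD)
qed

lemma blinfun_right_inverse_if_surj:
  assumes "surj (blinfun_apply F)" "F o\<^sub>L G o\<^sub>L F = F"
  shows "F (G y) = y"
  using assms by (metis blinfun_apply_blinfun_compose surjD)

section \<open>Para-Hilbert spaces\<close>

lemma bounded_linear_imp_bounded_linear_on: "bounded_linear f \<Longrightarrow> bounded_linear_on S f"
  unfolding bounded_linear_on_def
  by (metis bounded_linear.nonneg_bounded linear_add linear_scale bounded_linear.linear mult.commute)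

lemma blinfun_bounded_linear_on: "bounded_linear_on S (blinfun_apply f)"
  by (rule bounded_linear_imp_bounded_linear_on, rule blinfun.bounded_linear_right)

context
  fixes i :: "'x::banach \<Rightarrow>\<^sub>L 'h::{real_inner,complete_space}" and j :: "'h \<Rightarrow>\<^sub>L 'y::banach"
    and J :: "'x \<Rightarrow>\<^sub>L ('y \<Rightarrow>\<^sub>L real)"
  assumes E: "para_hilbert i j J"
begin

lemma para_hilbert_compat: "J u (j v) = inner (i u) v"
proof -
  have "\<forall>u\<in>UNIV. \<forall>v\<in>UNIV. inner (i u) v = J u (j v)"
    using E unfolding para_hilbert_def para_hilbert_on_def by (elim conjE) assumption
  thus ?thesis by simp
qed

lemma para_hilbert_i_dense: "closure (range i) = UNIV"
proof -
  have "UNIV \<subseteq> closure (range i)"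
    using E unfolding para_hilbert_def para_hilbert_on_def by (elim conjE) assumption
  thus ?thesis by blast
qed

lemma para_hilbert_j_dense: "closure (range j) = UNIV"
proof -
  have "UNIV \<subseteq> closure (range j)"
    using E unfolding para_hilbert_def para_hilbert_on_def by (elim conjE) assumption
  thus ?thesis by blast
qed

lemma para_hilbert_i_inj: "inj (blinfun_apply i)"
  using E unfolding para_hilbert_def para_hilbert_on_def by (elim conjE) assumption

lemma para_hilbert_j_inj: "inj (blinfun_apply j)"
  using E unfolding para_hilbert_def para_hilbert_on_def by (elim conjE) assumption

lemma para_hilbert_J_eq_0: "(\<And>w. J u w = 0) \<Longrightarrow> u = 0"
proof -
  have "\<forall>u\<in>UNIV. (\<forall>w\<in>UNIV. J u w = 0) \<longrightarrow> u = 0"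
    using E unfolding para_hilbert_def para_hilbert_on_def by (elim conjE) assumption
  thus "(\<And>w. J u w = 0) \<Longrightarrow> u = 0" by blast
qed

lemma para_hilbert_J_lower_bound:
  obtains C where "\<And>u M. M \<ge> 0 \<Longrightarrow> (\<And>w. \<bar>J u w\<bar> \<le> M * norm w) \<Longrightarrow> norm u \<le> C * M"
proof -
  have "\<exists>C. \<forall>u\<in>UNIV. \<forall>M\<ge>0. (\<forall>w\<in>UNIV. \<bar>J u w\<bar> \<le> M * norm w) \<longrightarrow> norm u \<le> C * M"
    using E unfolding para_hilbert_def para_hilbert_on_def by (elim conjE) assumption
  thus ?thesis using that by blast
qed

lemma para_hilbert_J_surj: "\<exists>u. J u = \<phi>"
proof -
  have "\<forall>\<phi>. bounded_linear_on UNIV \<phi> \<longrightarrow> (\<exists>u\<in>UNIV. \<forall>w\<in>UNIV. J u w = \<phi> w)"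
    using E unfolding para_hilbert_def para_hilbert_on_def by (elim conjE) assumption
  then obtain u where "\<forall>w. J u w = \<phi> w" using blinfun_bounded_linear_on by blast
  thus ?thesis by (blast intro: blinfun_eqI)
qed

lemma para_hilbert_J_bij: "bij (blinfun_apply J)"
proof (rule bijI)
  show "inj (blinfun_apply J)"
  proof (rule injI)
    fix u u' assume "J u = J u'"
    hence "J (u - u') w = 0" for w by (simp add: blinfun.diff_right)
    thus "u = u'" using para_hilbert_J_eq_0 by fastforce
  qed
  show "surj (blinfun_apply J)" using para_hilbert_J_surj by (metis surjI)
qed

lemma para_hilbert_Y_eq_0:
  assumes "\<And>u. J u w = 0"
  shows "w = 0"
proof (rule functionals_separate_points)
  fix \<phi> :: "'y \<Rightarrow>\<^sub>L real"
  obtain u where "J u = \<phi>" using para_hilbert_J_surj by blast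
  thus "\<phi> w = 0" using assms by blast
qed

end

definition blinfun_inv :: "('a::banach \<Rightarrow>\<^sub>L 'b::banach) \<Rightarrow> 'b \<Rightarrow>\<^sub>L 'a" where
  "blinfun_inv f = Blinfun (inv (blinfun_apply f))"

lemma blinfun_inv:
  assumes "bij (blinfun_apply f)"
  shows blinfun_inv_left: "blinfun_inv f (f x) = x" and blinfun_inv_right: "f (blinfun_inv f y) = y"
  using assms bounded_linear_inv[OF blinfun.bounded_linear_right assms]
  by (simp_all add: blinfun_inv_def bounded_linear_Blinfun_apply bij_is_inj bij_is_surj surj_f_inv_f)

lemma K_map_apply: "K_map J w u = J u w"
  unfolding K_map_def
  by (simp add: bounded_linear_Blinfun_apply bounded_linear_compose[OF blinfun.bounded_linear_left blinfun.bounded_linear_right])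

lemma K_map_zero: "K_map J 0 = 0"
  by (rule blinfun_eqI) (simp add: K_map_apply)

lemma bounded_linear_K_map: "bounded_linear (K_map J)"
proof (rule bounded_linear_intro[of _ "norm J"])
  show "K_map J (a + b) = K_map J a + K_map J b" "K_map J (c *\<^sub>R a) = c *\<^sub>R K_map J a" for a b c
    by (auto intro!: blinfun_eqI simp: K_map_apply blinfun.add_right blinfun.scaleR_right
        plus_blinfun.rep_eq scaleR_blinfun.rep_eq)
  show "norm (K_map J w) \<le> norm w * norm J" for w
  proof (rule norm_blinfun_bound)
    show "norm (K_map J w u) \<le> norm w * norm J * norm u" for u
      using abs_blinfun_apply2_le[of J u w] by (simp add: K_map_apply ac_simps)
  qed simp
qed

lemma K_map_surj:
  fixes J :: "'x::banach \<Rightarrow>\<^sub>L ('y::banach \<Rightarrow>\<^sub>L real)"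
  assumes "para_hilbert i j J" and "reflexive_space TYPE('y)"
  shows "\<exists>w. K_map J w = f"
proof -
  note J_inv = blinfun_inv[OF para_hilbert_J_bij[OF assms(1)]]
  obtain w :: 'y where w: "\<And>\<phi>. (f o\<^sub>L blinfun_inv J) \<phi> = \<phi> w"
    using assms(2) unfolding reflexive_space_def by blast
  have "K_map J w u = f u" for u using w[of "J u"] by (simp add: K_map_apply J_inv)
  thus ?thesis by (blast intro: blinfun_eqI)
qed

lemma reflexive_space_preadjoint:
  fixes M :: "('y::banach \<Rightarrow>\<^sub>L real) \<Rightarrow> ('z::real_normed_vector \<Rightarrow>\<^sub>L real)"
  assumes refl: "reflexive_space TYPE('y)" and M: "bounded_linear M"
  obtains B :: "'z \<Rightarrow>\<^sub>L 'y" where "\<And>\<phi> z. blinfun_apply \<phi> (B z) = M \<phi> z"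
proof -
  have "\<exists>w. \<forall>\<phi>. blinfun_apply \<phi> w = M \<phi> z" for z
  proof -
    have "bounded_linear (\<lambda>\<phi>. M \<phi> z)" by (rule bounded_linear_compose[OF blinfun.bounded_linear_left M])
    moreover obtain w where "\<And>\<phi>. Blinfun (\<lambda>\<phi>. M \<phi> z) \<phi> = \<phi> w"
      using refl unfolding reflexive_space_def by blast
    ultimately show ?thesis by (auto simp: bounded_linear_Blinfun_apply)
  qed
  then obtain B where B: "\<And>\<phi> z. blinfun_apply \<phi> (B z) = M \<phi> z" by metis
  have eq: "B z = w" if "\<And>\<phi>. blinfun_apply \<phi> w = M \<phi> z" for w z
  proof -
    have "blinfun_apply \<phi> (B z - w) = 0" for \<phi> :: "'y \<Rightarrow>\<^sub>L real"
      using B[of \<phi> z] that[of \<phi>] by (simp add: blinfun.diff_right)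
    thus ?thesis using functionals_separate_points[of "B z - w"] by simp
  qed
  obtain C where C: "\<And>\<phi>. norm (M \<phi>) \<le> norm \<phi> * C" "C \<ge> 0"
    using bounded_linear.nonneg_bounded[OF M] by blast
  interpret M: bounded_linear M by fact
  have "bounded_linear B"
  proof (rule bounded_linear_intro[of _ C])
    show "B (a + b) = B a + B b" for a b
      by (rule eq) (simp add: B blinfun.add_right M.add plus_blinfun.rep_eq)
    show "B (c *\<^sub>R a) = c *\<^sub>R B a" for a c
      by (rule eq) (simp add: B blinfun.scaleR_right M.scaleR scaleR_blinfun.rep_eq)
    show "norm (B z) \<le> norm z * C" for z
    proof -
      obtain \<phi> :: "'y \<Rightarrow>\<^sub>L real" where \<phi>: "norm \<phi> \<le> 1" "\<phi> (B z) = norm (B z)"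
        using hahn_banach_norming by blast
      have "norm (B z) \<le> norm (M \<phi>) * norm z" using \<phi>(2) norm_blinfun[of "M \<phi>" z] by (simp add: B)
      also have "\<dots> \<le> (norm \<phi> * C) * norm z" using C(1) by (rule mult_right_mono) simp
      also have "\<dots> \<le> C * norm z" using \<phi>(1) C(2) by (simp add: mult_left_le_one_le mult_right_mono)
      finally show ?thesis by (simp add: ac_simps)
    qed
  qed
  thus ?thesis using that[of "Blinfun B"] by (simp add: bounded_linear_Blinfun_apply B)
qed

section \<open>Surjective morphisms\<close>

locale surjective_morphism =
  fixes i1 :: "'x1::banach \<Rightarrow>\<^sub>L 'h1::{real_inner,complete_space}"
    and j1 :: "'h1 \<Rightarrow>\<^sub>L 'y1::banach"
    and J1 :: "'x1 \<Rightarrow>\<^sub>L ('y1 \<Rightarrow>\<^sub>L real)"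
    and i2 :: "'x2::banach \<Rightarrow>\<^sub>L 'h2::{real_inner,complete_space}"
    and j2 :: "'h2 \<Rightarrow>\<^sub>L 'y2::banach"
    and J2 :: "'x2 \<Rightarrow>\<^sub>L ('y2 \<Rightarrow>\<^sub>L real)"
    and AX :: "'x1 \<Rightarrow>\<^sub>L 'x2" and AH :: "'h1 \<Rightarrow>\<^sub>L 'h2" and AY :: "'y1 \<Rightarrow>\<^sub>L 'y2"
  assumes E1: "para_hilbert i1 j1 J1" and refl1: "reflexive_space TYPE('y1)"
    and E2: "para_hilbert i2 j2 J2"
    and A: "morphism i1 j1 i2 j2 AX AH AY"
    and surj_X: "surj (blinfun_apply AX)" and surj_H: "surj (blinfun_apply AH)"
    and surj_Y: "surj (blinfun_apply AY)"
begin

lemma i2_AX: "i2 (AX u) = AH (i1 u)"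
  using A unfolding morphism_def by (metis blinfun_apply_blinfun_compose)

lemma j2_AH: "j2 (AH v) = AY (j1 v)"
  using A unfolding morphism_def by (metis blinfun_apply_blinfun_compose)

abbreviation K1 :: "'y1 \<Rightarrow> ('x1 \<Rightarrow>\<^sub>L real)" where "K1 \<equiv> K_map J1"

abbreviation J1_inv :: "('y1 \<Rightarrow>\<^sub>L real) \<Rightarrow>\<^sub>L 'x1" where "J1_inv \<equiv> blinfun_inv J1"

lemmas J1_inv_right = blinfun_inv_right[OF para_hilbert_J_bij[OF E1]]

definition block_J :: "'x1 \<times> ('y2 \<Rightarrow>\<^sub>L real) \<Rightarrow> ('y1 \<Rightarrow>\<^sub>L real) \<times> 'x2" where
  "block_J = (\<lambda>p. (J1 (fst p) + (snd p o\<^sub>L AY), AX (fst p)))"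

definition block_K :: "'y1 \<times> ('x2 \<Rightarrow>\<^sub>L real) \<Rightarrow> ('x1 \<Rightarrow>\<^sub>L real) \<times> 'y2" where
  "block_K = (\<lambda>p. (K1 (fst p) + (snd p o\<^sub>L AX), AY (fst p)))"

lemma block_J_apply: "block_J (u, \<mu>) = (J1 u + (\<mu> o\<^sub>L AY), AX u)"
  by (simp add: block_J_def)

lemma block_K_apply: "block_K (w, \<nu>) = (K1 w + (\<nu> o\<^sub>L AX), AY w)"
  by (simp add: block_K_def)

lemma bounded_linear_block_J: "bounded_linear block_J"
  unfolding block_J_def
  by (intro bounded_linear_Pair bounded_linear_add bounded_linear_compose[OF blinfun.bounded_linear_right]
      bounded_linear_fst bounded_linear_snd
      bounded_linear_compose[OF bounded_bilinear.bounded_linear_left[OF bounded_bilinear_blinfun_compose]])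

lemma bounded_linear_block_K: "bounded_linear block_K"
  unfolding block_K_def
  by (intro bounded_linear_Pair bounded_linear_add bounded_linear_compose[OF blinfun.bounded_linear_right]
      bounded_linear_compose[OF bounded_linear_K_map] bounded_linear_fst bounded_linear_snd
      bounded_linear_compose[OF bounded_bilinear.bounded_linear_left[OF bounded_bilinear_blinfun_compose]])

definition compatible_right_inverses :: "('x2 \<Rightarrow>\<^sub>L 'x1) \<Rightarrow> ('y2 \<Rightarrow>\<^sub>L 'y1) \<Rightarrow> bool" where
  "compatible_right_inverses BX BY \<longleftrightarrow>
     (\<forall>g. AX (BX g) = g) \<and> (\<forall>y. AY (BY y) = y) \<and>
     (\<forall>g w. AY w = 0 \<longrightarrow> J1 (BX g) w = 0) \<and> (\<forall>u y. AX u = 0 \<longrightarrow> J1 u (BY y) = 0)"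

lemma compatible_right_inversesD:
  assumes "compatible_right_inverses BX BY"
  shows "AX (BX g) = g" "AY (BY y) = y" "AY w = 0 \<Longrightarrow> J1 (BX g) w = 0" "AX u = 0 \<Longrightarrow> J1 u (BY y) = 0"
  using assms unfolding compatible_right_inverses_def by blast+

(* Orthogonality to ker AH makes i1 (BX g) the minimal-norm preimage of i2 g under AH, which
   bounds it by the open mapping theorem; BH is then the extension to the closure of range i2. *)
lemma minimal_norm_right_inverse_H:
  fixes BX :: "'x2 \<Rightarrow>\<^sub>L 'x1"
  assumes AX_BX: "\<And>g. AX (BX g) = g" and BX_ker: "\<And>g w. AY w = 0 \<Longrightarrow> J1 (BX g) w = 0"
  obtains BH :: "'h2 \<Rightarrow>\<^sub>L 'h1" where "\<And>g. BH (i2 g) = i1 (BX g)" "\<And>v. AH (BH v) = v"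
    "\<And>v h. AH h = 0 \<Longrightarrow> inner (BH v) h = 0"
proof -
  have orth: "inner (i1 (BX g)) h = 0" if "AH h = 0" for g h
    using BX_ker[of "j1 h"] that by (simp flip: para_hilbert_compat[OF E1] j2_AH)
  obtain C where C: "\<And>y. \<exists>x. AH x = y \<and> norm x \<le> C * norm y"
    using open_mapping[OF blinfun.bounded_linear_right surj_H] by blast
  have "norm (i1 (BX g)) \<le> C * norm (i2 g)" for g
  proof -
    obtain x where "AH x = i2 g" "norm x \<le> C * norm (i2 g)" using C by blast
    moreover have "AH x = AH (i1 (BX g))" using \<open>AH x = i2 g\<close> by (simp add: AX_BX flip: i2_AX)
    ultimately show ?thesis
      using norm_le_if_orthogonal_to_kernel[OF bounded_linear.linear[OF blinfun.bounded_linear_right] orth] by (meson order_trans)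
  qed
  then obtain BH :: "'h2 \<Rightarrow>\<^sub>L 'h1" where BH: "\<And>g. BH (i2 g) = i1 (BX g)"
    using blinfun_extend_dense_range[OF blinfun.bounded_linear_right
          bounded_linear_compose[OF blinfun.bounded_linear_right[of i1] blinfun.bounded_linear_right[of BX]]
          para_hilbert_i_dense[OF E2]] by blast
  have "AH o\<^sub>L BH = id_blinfun"
    by (rule blinfun_eq_on_dense[OF para_hilbert_i_dense[OF E2]]) (auto simp: BH AX_BX simp flip: i2_AX)
  hence "AH (BH v) = v" for v by (metis blinfun_apply_blinfun_compose blinfun_apply_id_blinfun)
  moreover have "inner (BH v) h = 0" if "AH h = 0" for v h
    by (rule continuous_eq_on_dense[OF para_hilbert_i_dense[OF E2], of "\<lambda>v. inner (BH v) h" "\<lambda>_. 0"])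
      (intro continuous_intros | auto simp: BH orth[OF that])+
  ultimately show ?thesis using that BH by blast
qed

lemma j1_right_inverse_H:
  fixes BX :: "'x2 \<Rightarrow>\<^sub>L 'x1" and BY :: "'y2 \<Rightarrow>\<^sub>L 'y1" and BH :: "'h2 \<Rightarrow>\<^sub>L 'h1"
  assumes compat: "compatible_right_inverses BX BY" and BH: "\<And>g. BH (i2 g) = i1 (BX g)"
  shows "j1 (BH v) = BY (j2 v)"
proof -
  note B = compatible_right_inversesD[OF compat]
  have "j1 (i1 (BX g)) = BY (j2 (i2 g))" for g
  proof -
    define d where "d = j1 (i1 (BX g)) - BY (j2 (i2 g))"
    have AY_d: "AY d = 0" by (simp add: d_def blinfun.diff_right B(1,2) flip: j2_AH i2_AX)
    have "J1 u d = 0" for u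
    proof -
      define u' where "u' = u - BX (AX u)"
      have "AX u' = 0" by (simp add: u'_def blinfun.diff_right B(1))
      have "J1 u' (j1 (i1 (BX g))) = J1 (BX g) (j1 (i1 u'))"
        by (simp add: para_hilbert_compat[OF E1] inner_commute)
      also have "\<dots> = 0" using \<open>AX u' = 0\<close> by (intro B(3)) (simp flip: j2_AH i2_AX)
      finally have "J1 u' d = 0" using B(4)[OF \<open>AX u' = 0\<close>] by (simp add: d_def blinfun.diff_right)
      moreover have "J1 (BX (AX u)) d = 0" by (rule B(3)[OF AY_d])
      ultimately show ?thesis by (simp add: u'_def blinfun.diff_right minus_blinfun.rep_eq)
    qed
    hence "d = 0" by (rule para_hilbert_Y_eq_0[OF E1])
    thus ?thesis by (simp add: d_def)
  qed
  hence "j1 o\<^sub>L BH = BY o\<^sub>L j2"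
    by (intro blinfun_eq_on_dense[OF para_hilbert_i_dense[OF E2]]) (auto simp: BH)
  thus ?thesis by (metis blinfun_apply_blinfun_compose)
qed

lemma pseudoinverse_if_compatible_right_inverses:
  assumes compat: "compatible_right_inverses BX BY"
  shows "\<exists>BH. is_pseudoinverse i1 j1 i2 j2 AX AH AY BX BH BY"
proof -
  note B = compatible_right_inversesD[OF compat]
  obtain BH :: "'h2 \<Rightarrow>\<^sub>L 'h1" where BH: "\<And>g. BH (i2 g) = i1 (BX g)" and AH_BH: "\<And>v. AH (BH v) = v"
    and orth: "\<And>v h. AH h = 0 \<Longrightarrow> inner (BH v) h = 0"
    using minimal_norm_right_inverse_H B(1,3) by metis
  have "is_pseudoinverse i1 j1 i2 j2 AX AH AY BX BH BY"
    using orthogonal_right_inverse_self_adjoint[OF bounded_linear.linear[OF blinfun.bounded_linear_right] AH_BH orth]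
    unfolding is_pseudoinverse_def morphism_def self_adjoint_op_def
    by (intro conjI allI blinfun_eqI) (simp_all add: BH j1_right_inverse_H[OF compat BH] B(1,2) AH_BH)
  thus ?thesis by blast
qed

(* BX is the (1,2) entry of the inverse; BY is the pre-adjoint of its (2,1) entry, which exists
   by reflexivity of Y1. *)
lemma compatible_right_inverses_if_block_J_invertible:
  assumes "cont_invertible block_J"
  shows "\<exists>BX BY. compatible_right_inverses BX BY"
proof -
  obtain G where G: "bounded_linear G" "\<And>p. G (block_J p) = p" "\<And>q. block_J (G q) = q"
    using assms unfolding cont_invertible_def by blast
  have bl_BX: "bounded_linear (\<lambda>g. fst (G (0, g)))" and bl_M: "bounded_linear (\<lambda>f. snd (G (f, 0)))"
    by (intro bounded_linear_compose[OF bounded_linear_fst] bounded_linear_compose[OF bounded_linear_snd]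
        bounded_linear_compose[OF G(1)] bounded_linear_Pair bounded_linear_zero bounded_linear_ident)+
  define BX :: "'x2 \<Rightarrow>\<^sub>L 'x1" where "BX = Blinfun (\<lambda>g. fst (G (0, g)))"
  define M where "M f = snd (G (f, 0))" for f
  have BX_apply: "BX g = fst (G (0, g))" for g by (simp add: BX_def bounded_linear_Blinfun_apply[OF bl_BX])
  have M_AY: "M (\<psi> o\<^sub>L AY) = \<psi>" for \<psi>
    using G(2)[of "(0, \<psi>)"] by (simp add: M_def block_J_apply)
  have M_J1: "M (J1 u) = 0" if "AX u = 0" for u
    using G(2)[of "(u, 0)"] that by (simp add: M_def block_J_apply)
  obtain BY :: "'y2 \<Rightarrow>\<^sub>L 'y1" where BY: "\<And>\<phi> y. blinfun_apply \<phi> (BY y) = M \<phi> y"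
    using reflexive_space_preadjoint[OF refl1 bl_M[folded M_def]] by blast
  have "AX (BX g) = g" for g
    using arg_cong[OF G(3)[of "(0, g)"], of snd] by (simp add: BX_apply block_J_def)
  moreover have "J1 (BX g) w = 0" if "AY w = 0" for g w
    using arg_cong[OF G(3)[of "(0, g)"], of "\<lambda>q. fst q w"] that
    by (simp add: BX_apply block_J_def plus_blinfun.rep_eq)
  moreover have "AY (BY y) = y" for y
  proof -
    have "\<psi> (AY (BY y) - y) = 0" for \<psi> :: "'y2 \<Rightarrow>\<^sub>L real"
      using BY[of "\<psi> o\<^sub>L AY" y] by (simp add: M_AY blinfun.diff_right)
    thus ?thesis using functionals_separate_points[of "AY (BY y) - y"] by simp
  qed
  moreover have "J1 u (BY y) = 0" if "AX u = 0" for u y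
    by (simp add: BY M_J1[OF that])
  ultimately show ?thesis unfolding compatible_right_inverses_def by blast
qed

lemma right_inverse_X_of_transpose_left_inverse:
  assumes N: "bounded_linear N" and N_AX: "\<And>\<nu>. N (\<nu> o\<^sub>L AX) = \<nu>"
  obtains BX :: "'x2 \<Rightarrow>\<^sub>L 'x1" where "\<And>g w. J1 (BX g) w = N (K1 w) g" "\<And>g. AX (BX g) = g"
proof -
  define F :: "'y1 \<Rightarrow>\<^sub>L ('x2 \<Rightarrow>\<^sub>L real)" where "F = Blinfun (\<lambda>w. N (K1 w))"
  define BX :: "'x2 \<Rightarrow>\<^sub>L 'x1" where "BX = J1_inv o\<^sub>L Blinfun (K_map F)"
  have BX_apply: "J1 (BX g) w = N (K1 w) g" for g w
    using bounded_linear_compose[OF N bounded_linear_K_map[of J1]]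
    by (simp add: BX_def F_def J1_inv_right K_map_apply bounded_linear_K_map bounded_linear_Blinfun_apply)
  have "AX (BX g) = g" for g
  proof -
    have "J2 (AX (BX g)) v = J2 g v" for v
    proof -
      obtain w where w: "K1 w = K_map J2 v o\<^sub>L AX" using K_map_surj[OF E1 refl1] by blast
      have "J2 (AX (BX g)) v = K1 w (BX g)" by (simp add: w K_map_apply)
      also have "\<dots> = N (K1 w) g" by (simp only: K_map_apply BX_apply)
      also have "\<dots> = J2 g v" by (simp add: w N_AX K_map_apply)
      finally show ?thesis .
    qed
    hence "AX (BX g) - g = 0"
      by (intro para_hilbert_J_eq_0[OF E2]) (simp add: blinfun.diff_right minus_blinfun.rep_eq)
    thus ?thesis by simp
  qed
  thus ?thesis using that BX_apply by blast
qed

(* BY is the (1,2) entry of the inverse; BX comes from its (2,1) entry N through J1. *)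
lemma compatible_right_inverses_if_block_K_invertible:
  assumes "cont_invertible block_K"
  shows "\<exists>BX BY. compatible_right_inverses BX BY"
proof -
  obtain G where G: "bounded_linear G" "\<And>p. G (block_K p) = p" "\<And>q. block_K (G q) = q"
    using assms unfolding cont_invertible_def by blast
  have bl_BY: "bounded_linear (\<lambda>y. fst (G (0, y)))" and bl_N: "bounded_linear (\<lambda>f. snd (G (f, 0)))"
    by (intro bounded_linear_compose[OF bounded_linear_fst] bounded_linear_compose[OF bounded_linear_snd]
        bounded_linear_compose[OF G(1)] bounded_linear_Pair bounded_linear_zero bounded_linear_ident)+
  define BY :: "'y2 \<Rightarrow>\<^sub>L 'y1" where "BY = Blinfun (\<lambda>y. fst (G (0, y)))"
  define N where "N f = snd (G (f, 0))" for f
  have BY_apply: "BY y = fst (G (0, y))" for y by (simp add: BY_def bounded_linear_Blinfun_apply[OF bl_BY])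
  have "N (\<nu> o\<^sub>L AX) = \<nu>" for \<nu>
    using G(2)[of "(0, \<nu>)"] by (simp add: N_def block_K_apply K_map_zero)
  then obtain BX :: "'x2 \<Rightarrow>\<^sub>L 'x1" where J1_BX: "\<And>g w. J1 (BX g) w = N (K1 w) g" and AX_BX: "\<And>g. AX (BX g) = g"
    using right_inverse_X_of_transpose_left_inverse bl_N[folded N_def] by blast
  have "J1 (BX g) w = 0" if "AY w = 0" for g w
    using G(2)[of "(w, 0)"] that by (simp add: J1_BX N_def block_K_apply)
  moreover have "AY (BY y) = y" for y
    using arg_cong[OF G(3)[of "(0, y)"], of snd] by (simp add: BY_apply block_K_def)
  moreover have "J1 u (BY y) = 0" if "AX u = 0" for u y
    using arg_cong[OF G(3)[of "(0, y)"], of "\<lambda>q. fst q u"] that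
    by (simp add: BY_apply block_K_def plus_blinfun.rep_eq K_map_apply)
  ultimately show ?thesis using AX_BX unfolding compatible_right_inverses_def by blast
qed

end

locale compatible_right_inverse_pair = surjective_morphism +
  fixes BX and BY
  assumes compatible: "compatible_right_inverses BX BY"
begin

lemmas AX_BX = compatible_right_inversesD(1)[OF compatible]
  and AY_BY = compatible_right_inversesD(2)[OF compatible]
  and J1_BX_ker = compatible_right_inversesD(3)[OF compatible]
  and J1_ker_BY = compatible_right_inversesD(4)[OF compatible]

definition proj_X where "proj_X = id_blinfun - (BX o\<^sub>L AX)"
definition proj_Y where "proj_Y = id_blinfun - (BY o\<^sub>L AY)"

lemma proj_X_apply: "proj_X u = u - BX (AX u)"
  by (simp add: proj_X_def minus_blinfun.rep_eq)

lemma proj_Y_apply: "proj_Y w = w - BY (AY w)"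
  by (simp add: proj_Y_def minus_blinfun.rep_eq)

lemma AX_proj_X: "AX (proj_X u) = 0"
  by (simp add: proj_X_apply blinfun.diff_right AX_BX)

lemma AY_proj_Y: "AY (proj_Y w) = 0"
  by (simp add: proj_Y_apply blinfun.diff_right AY_BY)

lemma proj_X_ker: "AX u = 0 \<Longrightarrow> proj_X u = u"
  by (simp add: proj_X_apply)

lemma proj_Y_ker: "AY w = 0 \<Longrightarrow> proj_Y w = w"
  by (simp add: proj_Y_apply)

lemma J1_proj_adjoint: "J1 (proj_X u) w = J1 u (proj_Y w)"
proof -
  have "J1 (BX g) w = J1 (BX g) (BY (AY w))" for g
    using J1_BX_ker[OF AY_proj_Y, of g w] by (simp add: proj_Y_apply blinfun.diff_right)
  moreover have "J1 u (BY y) = J1 (BX (AX u)) (BY y)" for y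
    using J1_ker_BY[OF AX_proj_X, of u y] by (simp add: proj_X_apply blinfun.diff_right minus_blinfun.rep_eq)
  ultimately show ?thesis
    by (simp add: proj_X_apply proj_Y_apply blinfun.diff_left blinfun.diff_right)
qed

lemma J1_ker_proj_Y: "AX u = 0 \<Longrightarrow> J1 u w = J1 u (proj_Y w)"
  using J1_proj_adjoint[of u w] by (simp add: proj_X_ker)

(* u = BX g plus a kernel part solving the first row on ker AY through J1; \<mu> absorbs the
   remaining component on the range of BY. *)
lemma block_J_surj: "surj block_J"
proof -
  have "\<exists>p. block_J p = (f, g)" for f g
  proof -
    define u where "u = BX g + proj_X (J1_inv ((f - J1 (BX g)) o\<^sub>L proj_Y))"
    define \<mu> where "\<mu> = (f - J1 u) o\<^sub>L BY"
    have J1_u: "J1 u (proj_Y w) = f (proj_Y w)" for w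
      using J1_proj_adjoint[of "J1_inv ((f - J1 (BX g)) o\<^sub>L proj_Y)" "proj_Y w"]
      by (simp add: u_def J1_inv_right proj_Y_ker[OF AY_proj_Y] blinfun.add_left blinfun.add_right
          plus_blinfun.rep_eq minus_blinfun.rep_eq)
    have "(J1 u + (\<mu> o\<^sub>L AY)) w = f w" for w
      using J1_u[of w] by (simp add: \<mu>_def proj_Y_apply blinfun.diff_right minus_blinfun.rep_eq plus_blinfun.rep_eq)
    hence "J1 u + (\<mu> o\<^sub>L AY) = f" by (rule blinfun_eqI)
    moreover have "AX u = g" by (simp add: u_def blinfun.add_right AX_BX AX_proj_X)
    ultimately show ?thesis by (intro exI[of _ "(u, \<mu>)"]) (simp add: block_J_apply)
  qed
  hence "y \<in> range block_J" for y using prod.collapse[of y] by (metis rangeI)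
  thus ?thesis by auto
qed

lemma block_J_inj: "inj block_J"
proof -
  have "p = 0" if "block_J p = 0" for p
  proof -
    obtain u \<mu> where p: "p = (u, \<mu>)" by (cases p)
    have AX_u: "AX u = 0" and eq: "J1 u + (\<mu> o\<^sub>L AY) = 0"
      using that by (simp_all add: p block_J_apply zero_prod_def)
    have "J1 u w = (J1 u + (\<mu> o\<^sub>L AY)) (proj_Y w)" for w
      using J1_ker_proj_Y[OF AX_u, of w] by (simp add: plus_blinfun.rep_eq AY_proj_Y)
    hence "u = 0" using eq by (intro para_hilbert_J_eq_0[OF E1]) simp
    hence "\<mu> = 0" using eq blinfun_compose_cancel_surj[OF surj_Y] by simp
    thus ?thesis using \<open>u = 0\<close> by (simp add: p zero_prod_def)
  qed
  thus ?thesis using linear_inj_iff_eq_0[OF bounded_linear.linear[OF bounded_linear_block_J]] by blast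
qed

lemma block_K_surj: "surj block_K"
proof -
  have "\<exists>p. block_K p = (f, g)" for f g
  proof -
    obtain z where z: "K1 z = (f - K1 (BY g)) o\<^sub>L proj_X" using K_map_surj[OF E1 refl1] by blast
    define w where "w = BY g + proj_Y z"
    define \<nu> where "\<nu> = (f - K1 w) o\<^sub>L BX"
    have J1_w: "J1 (proj_X u) w = f (proj_X u)" for u
      using J1_proj_adjoint[of "proj_X u" z] arg_cong[OF z, of "\<lambda>F. F (proj_X u)"]
        J1_ker_BY[OF AX_proj_X, of u g]
      by (simp add: w_def K_map_apply proj_X_ker[OF AX_proj_X] blinfun.add_right minus_blinfun.rep_eq)
    have "(K1 w + (\<nu> o\<^sub>L AX)) u = f u" for u
      using J1_w[of u] by (simp add: \<nu>_def K_map_apply proj_X_apply blinfun.diff_left blinfun.diff_right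
          minus_blinfun.rep_eq plus_blinfun.rep_eq)
    hence "K1 w + (\<nu> o\<^sub>L AX) = f" by (rule blinfun_eqI)
    moreover have "AY w = g" by (simp add: w_def blinfun.add_right AY_BY AY_proj_Y)
    ultimately show ?thesis by (intro exI[of _ "(w, \<nu>)"]) (simp add: block_K_apply)
  qed
  hence "y \<in> range block_K" for y using prod.collapse[of y] by (metis rangeI)
  thus ?thesis by auto
qed

lemma block_K_inj: "inj block_K"
proof -
  have "p = 0" if "block_K p = 0" for p
  proof -
    obtain w \<nu> where p: "p = (w, \<nu>)" by (cases p)
    have AY_w: "AY w = 0" and eq: "K1 w + (\<nu> o\<^sub>L AX) = 0"
      using that by (simp_all add: p block_K_apply zero_prod_def)
    have "(K1 w + (\<nu> o\<^sub>L AX)) (proj_X u) = J1 (proj_X u) w" for u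
      by (simp add: K_map_apply plus_blinfun.rep_eq AX_proj_X)
    also have "J1 (proj_X u) w = J1 u w" for u
      using J1_BX_ker[OF AY_w, of "AX u"] by (simp add: proj_X_apply blinfun.diff_right minus_blinfun.rep_eq)
    finally have "J1 u w = (K1 w + (\<nu> o\<^sub>L AX)) (proj_X u)" for u ..
    hence "w = 0" using eq by (intro para_hilbert_Y_eq_0[OF E1]) simp
    hence "\<nu> = 0" using eq blinfun_compose_cancel_surj[OF surj_X] by (simp add: K_map_zero)
    thus ?thesis using \<open>w = 0\<close> by (simp add: p zero_prod_def)
  qed
  thus ?thesis using linear_inj_iff_eq_0[OF bounded_linear.linear[OF bounded_linear_block_K]] by blast
qed

lemma kernel_J1_eq_0:
  assumes "AX u = 0" and "\<And>w. AY w = 0 \<Longrightarrow> J1 u w = 0"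
  shows "u = 0"
  using assms J1_ker_proj_Y[OF assms(1)] AY_proj_Y by (intro para_hilbert_J_eq_0[OF E1]) metis

lemma kernel_J1_surj:
  assumes "bounded_linear_on {w. AY w = 0} \<phi>"
  obtains u where "AX u = 0" "\<And>w. AY w = 0 \<Longrightarrow> J1 u w = \<phi> w"
proof -
  obtain C where C: "\<And>w. AY w = 0 \<Longrightarrow> norm (\<phi> w) \<le> C * norm w"
    using assms unfolding bounded_linear_on_def by auto
  have "bounded_linear (\<lambda>w. \<phi> (proj_Y w))"
  proof (rule bounded_linear_intro[of _ "max C 0 * norm proj_Y"])
    show "\<phi> (proj_Y (x + y)) = \<phi> (proj_Y x) + \<phi> (proj_Y y)" for x y
      using assms AY_proj_Y unfolding bounded_linear_on_def by (simp add: blinfun.add_right)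
    show "\<phi> (proj_Y (c *\<^sub>R x)) = c *\<^sub>R \<phi> (proj_Y x)" for c x
      using assms AY_proj_Y unfolding bounded_linear_on_def by (simp add: blinfun.scaleR_right)
    show "norm (\<phi> (proj_Y x)) \<le> norm x * (max C 0 * norm proj_Y)" for x
    proof -
      have "norm (\<phi> (proj_Y x)) \<le> max C 0 * norm (proj_Y x)"
        using C[OF AY_proj_Y] by (meson max.cobounded1 mult_right_mono norm_ge_zero order_trans)
      also have "\<dots> \<le> max C 0 * (norm proj_Y * norm x)" by (intro mult_left_mono norm_blinfun) simp
      finally show ?thesis by (simp add: ac_simps)
    qed
  qed
  moreover define u where "u = proj_X (J1_inv (Blinfun (\<lambda>w. \<phi> (proj_Y w))))"
  ultimately have "J1 u w = \<phi> w" if "AY w = 0" for w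
    using that by (simp add: u_def J1_proj_adjoint J1_inv_right bounded_linear_Blinfun_apply proj_Y_ker AY_proj_Y)
  thus ?thesis using that AX_proj_X u_def by blast
qed

lemma kernel_J1_lower_bound:
  obtains C where "\<And>u M. AX u = 0 \<Longrightarrow> M \<ge> 0 \<Longrightarrow> (\<And>w. AY w = 0 \<Longrightarrow> \<bar>J1 u w\<bar> \<le> M * norm w) \<Longrightarrow>
    norm u \<le> C * M"
proof -
  obtain C0 where C0: "\<And>u M. M \<ge> 0 \<Longrightarrow> (\<And>w. \<bar>J1 u w\<bar> \<le> M * norm w) \<Longrightarrow> norm u \<le> C0 * M"
    using para_hilbert_J_lower_bound[OF E1] by blast
  have "norm u \<le> (C0 * norm proj_Y) * M"
    if u: "AX u = 0" and M: "M \<ge> 0" and bound: "\<And>w. AY w = 0 \<Longrightarrow> \<bar>J1 u w\<bar> \<le> M * norm w" for u M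
  proof -
    have "\<bar>J1 u w\<bar> \<le> (M * norm proj_Y) * norm w" for w
    proof -
      have "\<bar>J1 u w\<bar> \<le> M * norm (proj_Y w)" using J1_ker_proj_Y[OF u] bound[OF AY_proj_Y] by simp
      also have "\<dots> \<le> M * (norm proj_Y * norm w)" by (intro mult_left_mono norm_blinfun M)
      finally show ?thesis by (simp add: ac_simps)
    qed
    hence "norm u \<le> C0 * (M * norm proj_Y)" using M by (intro C0) auto
    thus ?thesis by (simp add: ac_simps)
  qed
  thus ?thesis using that by blast
qed

end

locale pseudoinverse_morphism = surjective_morphism +
  fixes BX and BH and BY
  assumes pseudoinverse: "is_pseudoinverse i1 j1 i2 j2 AX AH AY BX BH BY"
begin

lemma AX_BX: "AX (BX g) = g" and AH_BH: "AH (BH v) = v" and AY_BY: "AY (BY y) = y"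
  using pseudoinverse surj_X surj_H surj_Y blinfun_right_inverse_if_surj unfolding is_pseudoinverse_def by blast+

lemma i1_BX: "i1 (BX g) = BH (i2 g)" and j1_BH: "j1 (BH v) = BY (j2 v)"
  using pseudoinverse unfolding is_pseudoinverse_def morphism_def
  by (metis blinfun_apply_blinfun_compose)+

lemma J1_BX_AX: "J1 (BX (AX u)) w = J1 u (BY (AY w))"
proof -
  have self_adjoint: "inner (BH (AH x)) y = inner x (BH (AH y))" for x y
    using pseudoinverse unfolding is_pseudoinverse_def self_adjoint_op_def by simp
  have "J1 (BX (AX u)) (j1 v) = J1 u (BY (AY (j1 v)))" for v
    using self_adjoint[of "i1 u" v]
    by (simp add: para_hilbert_compat[OF E1] i1_BX i2_AX flip: j2_AH j1_BH)
  hence "J1 (BX (AX u)) = J1 u o\<^sub>L BY o\<^sub>L AY"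
    by (intro blinfun_eq_on_dense[OF para_hilbert_j_dense[OF E1]]) auto
  thus ?thesis by (metis blinfun_apply_blinfun_compose)
qed

lemma compatible_right_inverses: "compatible_right_inverses BX BY"
proof -
  have "J1 (BX g) w = 0" if "AY w = 0" for g w
    using J1_BX_AX[of "BX g" w] that by (simp add: AX_BX)
  moreover have "J1 u (BY y) = 0" if "AX u = 0" for u y
    using J1_BX_AX[of u "BY y"] that by (simp add: AY_BY)
  ultimately show ?thesis unfolding compatible_right_inverses_def by (simp add: AX_BX AY_BY)
qed

end

sublocale pseudoinverse_morphism \<subseteq> compatible_right_inverse_pair i1 j1 J1 i2 j2 J2 AX AH AY BX BY
  by unfold_locales (rule compatible_right_inverses)

context pseudoinverse_morphism
begin

definition proj_H where "proj_H = id_blinfun - (BH o\<^sub>L AH)"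

lemma proj_H_apply: "proj_H v = v - BH (AH v)"
  by (simp add: proj_H_def minus_blinfun.rep_eq)

lemma AH_proj_H: "AH (proj_H v) = 0"
  by (simp add: proj_H_apply blinfun.diff_right AH_BH)

lemma proj_H_ker: "AH v = 0 \<Longrightarrow> proj_H v = v"
  by (simp add: proj_H_apply)

lemma proj_H_i1: "proj_H (i1 u) = i1 (proj_X u)"
  by (simp add: proj_H_apply proj_X_apply blinfun.diff_right i1_BX i2_AX)

lemma proj_Y_j1: "proj_Y (j1 v) = j1 (proj_H v)"
  by (simp add: proj_Y_apply proj_H_apply blinfun.diff_right j1_BH j2_AH)

lemma kernel_para_hilbert:
  "para_hilbert_on {u. AX u = 0} {v. AH v = 0} {w. AY w = 0} (blinfun_apply i1) (blinfun_apply j1) (\<lambda>u w. J1 u w)"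
  unfolding para_hilbert_on_def
proof (intro conjI ballI allI impI)
  show "subspace {u. AX u = 0}" "subspace {v. AH v = 0}" "subspace {w. AY w = 0}"
    by (rule subspace_blinfun_kernel)+
  show "closed {u. AX u = 0}" "closed {v. AH v = 0}" "closed {w. AY w = 0}"
    by (rule closed_blinfun_kernel)+
  show "blinfun_apply i1 ` {u. AX u = 0} \<subseteq> {v. AH v = 0}" "blinfun_apply j1 ` {v. AH v = 0} \<subseteq> {w. AY w = 0}"
    by (auto simp flip: i2_AX j2_AH)
  show "bounded_linear_on {u. AX u = 0} (blinfun_apply i1)" "bounded_linear_on {v. AH v = 0} (blinfun_apply j1)"
    "bounded_linear_on {w. AY w = 0} (J1 u)" for u
    by (rule blinfun_bounded_linear_on)+
  show "inj_on (blinfun_apply i1) {u. AX u = 0}" "inj_on (blinfun_apply j1) {v. AH v = 0}"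
    using para_hilbert_i_inj[OF E1] para_hilbert_j_inj[OF E1] by (auto intro: inj_on_subset)
  show "{v. AH v = 0} \<subseteq> closure (blinfun_apply i1 ` {u. AX u = 0})"
    by (rule subset_closure_image_if_retraction[OF para_hilbert_i_dense[OF E1], of _ proj_H])
      (auto simp: proj_H_ker proj_H_i1 AX_proj_X)
  show "{w. AY w = 0} \<subseteq> closure (blinfun_apply j1 ` {v. AH v = 0})"
    by (rule subset_closure_image_if_retraction[OF para_hilbert_j_dense[OF E1], of _ proj_Y])
      (auto simp: proj_Y_ker proj_Y_j1 AH_proj_H)
  show "J1 (u + u') w = J1 u w + J1 u' w" "J1 (c *\<^sub>R u) w = c * J1 u w" for u u' w c
    by (simp_all add: blinfun.add_right blinfun.scaleR_right plus_blinfun.rep_eq scaleR_blinfun.rep_eq)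
  show "\<exists>C. \<forall>u\<in>{u. AX u = 0}. \<forall>w\<in>{w. AY w = 0}. \<bar>J1 u w\<bar> \<le> C * norm u * norm w"
    using abs_blinfun_apply2_le by blast
  show "u = 0" if "u \<in> {u. AX u = 0}" "\<forall>w\<in>{w. AY w = 0}. J1 u w = 0" for u
    using that kernel_J1_eq_0 by simp
  show "\<exists>u\<in>{u. AX u = 0}. \<forall>w\<in>{w. AY w = 0}. J1 u w = \<phi> w" if \<phi>: "bounded_linear_on {w. AY w = 0} \<phi>" for \<phi>
  proof -
    obtain u where "AX u = 0" "\<And>w. AY w = 0 \<Longrightarrow> J1 u w = \<phi> w" using kernel_J1_surj[OF \<phi>] by blast
    thus ?thesis by auto
  qed
  show "\<exists>C. \<forall>u\<in>{u. AX u = 0}. \<forall>M\<ge>0. (\<forall>w\<in>{w. AY w = 0}. \<bar>J1 u w\<bar> \<le> M * norm w) \<longrightarrow> norm u \<le> C * M"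
  proof -
    obtain C where "\<And>u M. AX u = 0 \<Longrightarrow> M \<ge> 0 \<Longrightarrow> (\<And>w. AY w = 0 \<Longrightarrow> \<bar>J1 u w\<bar> \<le> M * norm w) \<Longrightarrow>
        norm u \<le> C * M"
      using kernel_J1_lower_bound by blast
    thus ?thesis by auto
  qed
  show "i1 u \<bullet> v = J1 u (j1 v)" for u v
    by (simp add: para_hilbert_compat[OF E1])
qed

end

context surjective_morphism
begin

lemma pseudoinverse_iff_compatible_right_inverses:
  "(\<exists>BX BH BY. is_pseudoinverse i1 j1 i2 j2 AX AH AY BX BH BY) \<longleftrightarrow> (\<exists>BX BY. compatible_right_inverses BX BY)"
proof
  assume "\<exists>BX BH BY. is_pseudoinverse i1 j1 i2 j2 AX AH AY BX BH BY"
  then obtain BX BH BY where "is_pseudoinverse i1 j1 i2 j2 AX AH AY BX BH BY" by blast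
  then interpret pseudoinverse_morphism i1 j1 J1 i2 j2 J2 AX AH AY BX BH BY
    by unfold_locales
  show "\<exists>BX BY. compatible_right_inverses BX BY" using compatible_right_inverses by blast
qed (use pseudoinverse_if_compatible_right_inverses in blast)

lemma compatible_right_inverses_iff_block_J_invertible:
  "(\<exists>BX BY. compatible_right_inverses BX BY) \<longleftrightarrow> cont_invertible block_J"
proof
  assume "\<exists>BX BY. compatible_right_inverses BX BY"
  then obtain BX BY where "compatible_right_inverses BX BY" by blast
  then interpret compatible_right_inverse_pair i1 j1 J1 i2 j2 J2 AX AH AY BX BY
    by unfold_locales
  show "cont_invertible block_J"
    using bounded_linear_block_J block_J_inj block_J_surj by (intro cont_invertible_if_bij bijI)
qed (rule compatible_right_inverses_if_block_J_invertible)

lemma compatible_right_inverses_iff_block_K_invertible: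
  "(\<exists>BX BY. compatible_right_inverses BX BY) \<longleftrightarrow> cont_invertible block_K"
proof
  assume "\<exists>BX BY. compatible_right_inverses BX BY"
  then obtain BX BY where "compatible_right_inverses BX BY" by blast
  then interpret compatible_right_inverse_pair i1 j1 J1 i2 j2 J2 AX AH AY BX BY
    by unfold_locales
  show "cont_invertible block_K"
    using bounded_linear_block_K block_K_inj block_K_surj by (intro cont_invertible_if_bij bijI)
qed (rule compatible_right_inverses_if_block_K_invertible)

lemma kernel_para_hilbert_if_pseudoinverse:
  assumes "is_pseudoinverse i1 j1 i2 j2 AX AH AY BX BH BY"
  shows "para_hilbert_on {u. AX u = 0} {v. AH v = 0} {w. AY w = 0} (blinfun_apply i1) (blinfun_apply j1) (\<lambda>u w. J1 u w)"
proof -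
  interpret pseudoinverse_morphism i1 j1 J1 i2 j2 J2 AX AH AY BX BH BY
    by unfold_locales (fact assms)
  show ?thesis by (rule kernel_para_hilbert)
qed

end

theorem theorem2p17:
  fixes i1 :: "'x1::banach \<Rightarrow>\<^sub>L 'h1::{real_inner,complete_space}"
    and j1 :: "'h1 \<Rightarrow>\<^sub>L 'y1::banach"
    and J1 :: "'x1 \<Rightarrow>\<^sub>L ('y1 \<Rightarrow>\<^sub>L real)"
    and i2 :: "'x2::banach \<Rightarrow>\<^sub>L 'h2::{real_inner,complete_space}"
    and j2 :: "'h2 \<Rightarrow>\<^sub>L 'y2::banach"
    and J2 :: "'x2 \<Rightarrow>\<^sub>L ('y2 \<Rightarrow>\<^sub>L real)"
    and AX :: "'x1 \<Rightarrow>\<^sub>L 'x2" and AH :: "'h1 \<Rightarrow>\<^sub>L 'h2" and AY :: "'y1 \<Rightarrow>\<^sub>L 'y2"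
  assumes E1: "para_hilbert i1 j1 J1" and refl1: "reflexive_space TYPE('y1)"
    and E2: "para_hilbert i2 j2 J2" and refl2: "reflexive_space TYPE('y2)"
    and A: "morphism i1 j1 i2 j2 AX AH AY"
    and surj: "surj (blinfun_apply AX)" "surj (blinfun_apply AH)" "surj (blinfun_apply AY)"
  shows
    "((\<exists>BX BH BY. is_pseudoinverse i1 j1 i2 j2 AX AH AY BX BH BY)
        \<longleftrightarrow> cont_invertible
              (\<lambda>p :: 'x1 \<times> ('y2 \<Rightarrow>\<^sub>L real). (J1 (fst p) + (snd p o\<^sub>L AY), AX (fst p))))
     \<and>
     ((\<exists>BX BH BY. is_pseudoinverse i1 j1 i2 j2 AX AH AY BX BH BY)
        \<longleftrightarrow> cont_invertible
              (\<lambda>p :: 'y1 \<times> ('x2 \<Rightarrow>\<^sub>L real). (K_map J1 (fst p) + (snd p o\<^sub>L AX), AY (fst p))))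
     \<and>
     ((\<exists>BX BH BY. is_pseudoinverse i1 j1 i2 j2 AX AH AY BX BH BY) \<longrightarrow>
        para_hilbert_on {u. AX u = 0} {v. AH v = 0} {w. AY w = 0}
          (blinfun_apply i1) (blinfun_apply j1) (\<lambda>u w. J1 u w))"
proof -
  interpret surjective_morphism i1 j1 J1 i2 j2 J2 AX AH AY
    using E1 refl1 E2 A surj by unfold_locales
  show ?thesis
    using pseudoinverse_iff_compatible_right_inverses compatible_right_inverses_iff_block_J_invertible
      compatible_right_inverses_iff_block_K_invertible kernel_para_hilbert_if_pseudoinverse
    unfolding block_J_def block_K_def by blast
qed

end
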